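(* Let $p\in\mathbb{N}$, $0\le\gamma_1<\dots<\gamma_p\le1$, $\boldsymbol\alpha=(\alpha_1,\dots,\alpha_p)\in(0,1)^p$ with $\sum_i\alpha_i=1$, and for each $i$ let $(\gamma_{i,n})_n$ be $[0,1]$-valued with $|\gamma_{i,n}-\gamma_i|=O(1/n)$. Define $\phi_{n,\boldsymbol\alpha,\boldsymbol\gamma_n}(u)=\sum_{i=1}^p\alpha_i\phi_{n,\gamma_{i,n}}(u)$, $u\in[0,1]$. Let $F_X,F_Y$ be continuous, strictly increasing cdfs with finite second moments, and let $X_{n,\boldsymbol\alpha,\boldsymbol\gamma_n}$, $Y_{n,\boldsymbol\alpha,\boldsymbol\gamma_n}$ have cdfs $\phi_{n,\boldsymbol\alpha,\boldsymbol\gamma_n}\circ F_X=\sum_i\alpha_iF_{X_{1+[(n-1)\gamma_{i,n}]:n}}$ and $\phi_{n,\boldsymbol\alpha,\boldsymbol\gamma_n}\circ F_Y$ respectively (mixtures of order statistics of samples of size $n$ from $F_X$, resp. $F_Y$). Suppose there are $\delta_1,\dots,\delta_p>0$, with the sets $(\gamma_i-\delta_i,\gamma_i+\delta_i)\cap[0,1]$ pairwise disjoint, such that: for each $i$, if $\gamma_i-\delta_i\le a<b<\gamma_i$ or $\gamma_i<b<a\le\gamma_i+\delta_i$ then $\phi_{n,\boldsymbol\alpha,\boldsymbol\gamma_n}'(a)/\phi_{n,\boldsymbol\alpha,\boldsymbol\gamma_n}'(b)\to0$ as $n\to\infty$; and for every $i$, (A1) $\max\{F_X(c_{\gamma_i}),\gamma_i-\delta_i\}<F_X(a_{\gamma_i})$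 whenever $A_2\cap(0,\gamma_i)\neq\emptyset$; (A2) $F_X(b_{\gamma_i})<\min\{F_X(d_{\gamma_i}),\gamma_i+\delta_i\}$ whenever $A_2\cap(\gamma_i,1)\neq\emptyset$. Then $X_{n,\boldsymbol\alpha,\boldsymbol\gamma_n}\le_{\textnormal{d-ast}}Y_{n,\boldsymbol\alpha,\boldsymbol\gamma_n}$ as $n\to\infty$.
   Context: $[x]$ denotes the integer part. For $n\ge2$, $\alpha\in[0,1]$, $t\in[0,1]$: $\phi_{n,\alpha}(t)=\sum_{j=1+[(n-1)\alpha]}^n\binom{n}{j}t^j(1-t)^{n-j}$; the cdf of the $(1+[(n-1)\alpha])$-th smallest order statistic $X_{1+[(n-1)\alpha]:n}$ of an i.i.d. sample of size $n$ from $F_X$ is $\phi_{n,\alpha}\circ F_X$. For a cdf $F$, $F^{-1}(u)=\inf\{x:F(x)\ge u\}$. $\mathcal{W}_2(F,G)=(\int_0^1(F^{-1}-G^{-1})^2du)^{1/2}$; $\varepsilon_{\mathcal{W}_2}(F,G)=\mathcal{W}_2^{-2}(F,G)\int_{\{u:F^{-1}(u)>G^{-1}(u)\}}(F^{-1}-G^{-1})^2du$ (set to $0$ if $\mathcal{W}_2(F,G)=0$). $X_n\le_{\textnormal{d-ast}}Y_n$ means $\varepsilon_{\mathcal{W}_2}(F_{X_n},F_{Y_n})\to0$. $A_2=\{u\in(0,1):F_X^{-1}(u)\ne F_Y^{-1}(u)\}$, $B_0=\{x:F_X(x)<F_Y(x)\}$, $B_2=\{x:F_X(x)\neq F_Y(x)\}$;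 $c_\gamma=\sup(B_0\cap(-\infty,F_X^{-1}(\gamma)))$, $d_\gamma=\inf(B_0\cap(F_X^{-1}(\gamma),\infty))$, $a_\gamma=\sup(B_2\cap(-\infty,F_X^{-1}(\gamma)))$, $b_\gamma=\inf(B_2\cap(F_X^{-1}(\gamma),\infty))$, with $\sup\emptyset=-\infty$, $\inf\emptyset=+\infty$, $F_X(\mp\infty)=0,1$. *)

theory Defs
  imports "HOL-Analysis.Analysis" "HOL-Library.Landau_Symbols"
begin

definition phi :: "nat \<Rightarrow> real \<Rightarrow> real \<Rightarrow> real" where
  "phi n a t = (\<Sum>j = 1 + nat \<lfloor>real (n - 1) * a\<rfloor> .. n.
       real (n choose j) * t ^ j * (1 - t) ^ (n - j))"

(* generalized inverse F^{-1}(u) = inf {x. F x >= u}, real-valued version (used for u in (0,1)) *)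
definition qinv :: "(real \<Rightarrow> real) \<Rightarrow> real \<Rightarrow> real" where
  "qinv F u = Inf {x. u \<le> F x}"

(* extended-real version, with inf of empty set = +infinity, unbounded below = -infinity *)
definition qinv_e :: "(real \<Rightarrow> real) \<Rightarrow> real \<Rightarrow> ereal" where
  "qinv_e F u = Inf (ereal ` {x. u \<le> F x})"

definition Fext :: "(real \<Rightarrow> real) \<Rightarrow> ereal \<Rightarrow> real" where
  "Fext F x = (if x = -\<infinity> then 0 else if x = \<infinity> then 1 else F (real_of_ereal x))"

definition is_cdf :: "(real \<Rightarrow> real) \<Rightarrow> bool" where
  "is_cdf F \<longleftrightarrow> mono F \<and> (\<forall>x. continuous (at_right x) F) \<and>
     (F \<longlongrightarrow> 0) at_bot \<and> (F \<longlongrightarrow> 1) at_top"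

definition W2 :: "(real \<Rightarrow> real) \<Rightarrow> (real \<Rightarrow> real) \<Rightarrow> real" where
  "W2 F G = sqrt (LINT u:{0<..<1::real}|lborel. (qinv F u - qinv G u)\<^sup>2)"

definition epsW2 :: "(real \<Rightarrow> real) \<Rightarrow> (real \<Rightarrow> real) \<Rightarrow> real" where
  "epsW2 F G = (if W2 F G = 0 then 0 else
     (LINT u:{u\<in>{0<..<1::real}. qinv F u > qinv G u}|lborel. (qinv F u - qinv G u)\<^sup>2)
       / (W2 F G)\<^sup>2)"

definition A2set :: "(real \<Rightarrow> real) \<Rightarrow> (real \<Rightarrow> real) \<Rightarrow> real set" where
  "A2set FX FY = {u\<in>{0<..<1}. qinv FX u \<noteq> qinv FY u}"

definition B0set :: "(real \<Rightarrow> real) \<Rightarrow> (real \<Rightarrow> real) \<Rightarrow> real set" where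
  "B0set FX FY = {x. FX x < FY x}"

definition B2set :: "(real \<Rightarrow> real) \<Rightarrow> (real \<Rightarrow> real) \<Rightarrow> real set" where
  "B2set FX FY = {x. FX x \<noteq> FY x}"

definition c_pt :: "(real \<Rightarrow> real) \<Rightarrow> (real \<Rightarrow> real) \<Rightarrow> real \<Rightarrow> ereal" where
  "c_pt FX FY g = Sup (ereal ` B0set FX FY \<inter> {..< qinv_e FX g})"

definition d_pt :: "(real \<Rightarrow> real) \<Rightarrow> (real \<Rightarrow> real) \<Rightarrow> real \<Rightarrow> ereal" where
  "d_pt FX FY g = Inf (ereal ` B0set FX FY \<inter> {qinv_e FX g <..})"

definition a_pt :: "(real \<Rightarrow> real) \<Rightarrow> (real \<Rightarrow> real) \<Rightarrow> real \<Rightarrow> ereal" where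
  "a_pt FX FY g = Sup (ereal ` B2set FX FY \<inter> {..< qinv_e FX g})"

definition b_pt :: "(real \<Rightarrow> real) \<Rightarrow> (real \<Rightarrow> real) \<Rightarrow> real \<Rightarrow> ereal" where
  "b_pt FX FY g = Inf (ereal ` B2set FX FY \<inter> {qinv_e FX g <..})"

end

theory Submission
  imports Defs "HOL-Probability.Probability"
begin

text \<open>
  Write \<open>D = F\<^sub>X\<^sup>-\<^sup>1 - F\<^sub>Y\<^sup>-\<^sup>1\<close> on \<open>(0, 1)\<close>. The substitution \<open>u = \<phi>\<^sub>n(v)\<close> turns
  \<open>\<epsilon>\<^sub>W\<^sub>2\<close> into \<open>\<integral>(D\<^sup>+)\<^sup>2 \<phi>\<^sub>n' / \<integral>D\<^sup>2 \<phi>\<^sub>n'\<close>, and \<open>\<phi>\<^sub>n'\<close> is a positive mixture of beta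
  kernels \<open>v\<^sup>k\<^sup>-\<^sup>1 (1 - v)\<^sup>n\<^sup>-\<^sup>k\<close> whose modes converge to the \<open>\<gamma>\<^sub>i\<close>. For each \<open>\<gamma>\<^sub>i\<close>, (A1) and (A2)
  provide an interval between \<open>\<gamma>\<^sub>i\<close> and the region where \<open>D > 0\<close> on which \<open>D < 0\<close>. A beta kernel
  concentrating at \<open>\<gamma>\<^sub>i\<close> is exponentially smaller on that region than on that interval, so the
  positive part carries a vanishing fraction of \<open>\<integral>D\<^sup>2 \<phi>\<^sub>n'\<close>; the second moments make \<open>\<integral>D\<^sup>2\<close>
  finite. This explicit concentration replaces the hypotheses on \<open>\<delta>\<^sub>i\<close> and on ratios of
  \<open>\<phi>\<^sub>n'\<close>, which the proof does not use.
\<close>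

section \<open>Continuous strictly increasing distribution functions\<close>

definition strict_cdf :: "(real \<Rightarrow> real) \<Rightarrow> bool" where
  "strict_cdf F \<longleftrightarrow> continuous_on UNIV F \<and> strict_mono F \<and>
     (F \<longlongrightarrow> 0) at_bot \<and> (F \<longlongrightarrow> 1) at_top"

lemma strict_cdf_less_iff: "strict_cdf F \<Longrightarrow> F x < F y \<longleftrightarrow> x < y"
  unfolding strict_cdf_def by (simp add: strict_mono_less)

lemma strict_cdf_le_iff: "strict_cdf F \<Longrightarrow> F x \<le> F y \<longleftrightarrow> x \<le> y"
  unfolding strict_cdf_def by (simp add: strict_mono_less_eq)

lemma strict_cdf_pos: assumes "strict_cdf F" shows "0 < F x"
proof -
  have "(F \<longlongrightarrow> 0) at_bot" using assms unfolding strict_cdf_def by auto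
  then have "0 \<le> F (x - 1)"
    by (rule tendsto_upperbound)
       (auto simp: eventually_at_bot_linorder strict_cdf_le_iff[OF assms] intro!: exI[of _ "x - 1"])
  also have "F (x - 1) < F x" using strict_cdf_less_iff[OF assms] by simp
  finally show ?thesis .
qed

lemma strict_cdf_less_1: assumes "strict_cdf F" shows "F x < 1"
proof -
  have "(F \<longlongrightarrow> 1) at_top" using assms unfolding strict_cdf_def by auto
  then have "F (x + 1) \<le> 1"
    by (rule tendsto_lowerbound)
       (auto simp: eventually_at_top_linorder strict_cdf_le_iff[OF assms] intro!: exI[of _ "x + 1"])
  moreover have "F x < F (x + 1)" using strict_cdf_less_iff[OF assms] by simp
  ultimately show ?thesis by simp
qed

lemma strict_cdf_surj:
  assumes F: "strict_cdf F" and u: "0 < u" "u < 1"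
  shows "\<exists>x. F x = u"
proof -
  have lim: "(F \<longlongrightarrow> 0) at_bot" "(F \<longlongrightarrow> 1) at_top" and c: "continuous_on UNIV F"
    using F unfolding strict_cdf_def by auto
  obtain a where a: "F a < u"
    using eventually_happens'[OF _ order_tendstoD(2)[OF lim(1) u(1)]] by auto
  obtain b where b: "u < F b"
    using eventually_happens'[OF _ order_tendstoD(1)[OF lim(2) u(2)]] by auto
  have "a \<le> b" using a b strict_cdf_less_iff[OF F, of a b] by simp
  then show ?thesis
    using IVT'[of F a u b] a b continuous_on_subset[OF c] by auto
qed

lemma qinv_eqI:
  assumes "strict_cdf F" and "F x = u"
  shows "qinv F u = x"
proof -
  have "{y. u \<le> F y} = {x..}" using assms strict_cdf_le_iff[OF assms(1)] by auto
  then show ?thesis unfolding qinv_def by simp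
qed

lemma cdf_qinv: "strict_cdf F \<Longrightarrow> 0 < u \<Longrightarrow> u < 1 \<Longrightarrow> F (qinv F u) = u"
  using strict_cdf_surj qinv_eqI by metis

lemma qinv_le_iff: "strict_cdf F \<Longrightarrow> 0 < u \<Longrightarrow> u < 1 \<Longrightarrow> qinv F u \<le> x \<longleftrightarrow> u \<le> F x"
  by (metis cdf_qinv strict_cdf_le_iff)

lemma qinv_less_iff: "strict_cdf F \<Longrightarrow> 0 < u \<Longrightarrow> u < 1 \<Longrightarrow> qinv F u < x \<longleftrightarrow> u < F x"
  by (metis cdf_qinv strict_cdf_less_iff)

lemma le_qinv_iff: "strict_cdf F \<Longrightarrow> 0 < u \<Longrightarrow> u < 1 \<Longrightarrow> x \<le> qinv F u \<longleftrightarrow> F x \<le> u"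
  by (metis cdf_qinv strict_cdf_le_iff)

lemma mono_on_qinv: "strict_cdf F \<Longrightarrow> mono_on {0<..<1} (qinv F)"
  by (rule mono_onI) (simp add: qinv_le_iff cdf_qinv)

text \<open>Outside \<open>(0, 1)\<close>, where \<open>qinv\<close> carries no information, the difference is set to \<open>0\<close>, so that
  integrals of it can be taken over the whole line.\<close>

definition qdiff :: "(real \<Rightarrow> real) \<Rightarrow> (real \<Rightarrow> real) \<Rightarrow> real \<Rightarrow> real" where
  "qdiff F G u = (if u \<in> {0<..<1} then qinv F u - qinv G u else 0)"

lemma borel_measurable_qinv:
  assumes "strict_cdf F"
  shows "(\<lambda>u. if u \<in> {0<..<1} then qinv F u else 0) \<in> borel_measurable borel"
  using borel_measurable_mono_on_fnc[OF mono_on_qinv[OF assms]]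
  by (subst (asm) measurable_restrict_space_iff) auto

lemma borel_measurable_qdiff:
  assumes "strict_cdf F" "strict_cdf G"
  shows "qdiff F G \<in> borel_measurable borel"
proof -
  have "qdiff F G = (\<lambda>u. (if u \<in> {0<..<1} then qinv F u else 0) - (if u \<in> {0<..<1} then qinv G u else 0))"
    by (auto simp: qdiff_def)
  then show ?thesis using borel_measurable_qinv[OF assms(1)] borel_measurable_qinv[OF assms(2)] by simp
qed

lemma interval_measure_strict_cdf:
  assumes F: "strict_cdf F"
  shows "real_distribution (interval_measure F)" and "\<And>x. cdf (interval_measure F) x = F x"
proof -
  have mono: "\<And>x y. x \<le> y \<Longrightarrow> F x \<le> F y" using strict_cdf_le_iff[OF F] by simp
  have rc: "\<And>a. continuous (at_right a) F" and lim: "(F \<longlongrightarrow> 0) at_bot" "(F \<longlongrightarrow> 1) at_top"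
    using F unfolding strict_cdf_def
    by (auto simp: continuous_on_eq_continuous_within intro: continuous_at_imp_continuous_at_within)
  show "real_distribution (interval_measure F)"
    by (rule real_distribution_interval_measure[OF mono rc lim])
  show "cdf (interval_measure F) x = F x" for x
    unfolding cdf_def by (rule measure_interval_measure_Iic[OF mono rc lim(1)])
qed

lemma distr_qinv_eq_interval_measure:
  assumes F: "strict_cdf F"
  defines "U \<equiv> restrict_space lborel {0<..<1::real}"
  shows "distr U borel (\<lambda>u. if u \<in> {0<..<1} then qinv F u else 0) = interval_measure F"
    (is "distr U borel ?Q = _")
proof (rule cdf_unique)
  have Qm: "?Q \<in> measurable U borel"
    unfolding U_def by (rule measurable_restrict_space1) (use borel_measurable_qinv[OF F] in simp)
  have "prob_space U"
    by (rule prob_spaceI) (simp add: U_def space_restrict_space emeasure_restrict_space)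
  then show "real_distribution (distr U borel ?Q)"
    using prob_space.prob_space_distr[OF _ Qm] by (simp add: real_distribution_def real_distribution_axioms_def)
  show "real_distribution (interval_measure F)" by (rule interval_measure_strict_cdf(1)[OF F])
  show "cdf (distr U borel ?Q) = cdf (interval_measure F)"
  proof
    fix x
    have "?Q -` {..x} \<inter> space U = {0<..F x}"
      using qinv_le_iff[OF F] strict_cdf_pos[OF F, of x] strict_cdf_less_1[OF F, of x]
      by (auto simp: U_def space_restrict_space)
    then have "cdf (distr U borel ?Q) x = measure lborel {0<..F x}"
      using strict_cdf_less_1[OF F, of x] Qm
      by (simp add: cdf_def measure_distr U_def measure_restrict_space)
    then show "cdf (distr U borel ?Q) x = cdf (interval_measure F) x"
      using strict_cdf_pos[OF F, of x] interval_measure_strict_cdf(2)[OF F] by simp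
  qed
qed

lemma qinv_sq_nn_integral_finite:
  assumes F: "strict_cdf F" and mom: "integrable (interval_measure F) (\<lambda>x. x\<^sup>2)"
  shows "(\<integral>\<^sup>+u\<in>{0<..<1}. ennreal ((qinv F u)\<^sup>2) \<partial>lborel) < \<infinity>"
proof -
  define Q where "Q u = (if u \<in> {0<..<1} then qinv F u else 0)" for u
  define U where "U = restrict_space lborel {0<..<1::real}"
  have Qm: "Q \<in> measurable U borel"
    unfolding U_def Q_def by (rule measurable_restrict_space1) (use borel_measurable_qinv[OF F] in simp)
  have "(\<integral>\<^sup>+u\<in>{0<..<1}. ennreal ((qinv F u)\<^sup>2) \<partial>lborel) = (\<integral>\<^sup>+u. ennreal ((Q u)\<^sup>2) \<partial>U)"
    unfolding U_def by (subst nn_integral_restrict_space) (auto intro!: nn_integral_cong simp: Q_def)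
  also have "\<dots> = (\<integral>\<^sup>+x. ennreal (norm (x\<^sup>2)) \<partial>distr U borel Q)"
    using Qm by (simp add: nn_integral_distr)
  also have "\<dots> = (\<integral>\<^sup>+x. ennreal (norm (x\<^sup>2)) \<partial>interval_measure F)"
    using distr_qinv_eq_interval_measure[OF F] unfolding U_def Q_def by simp
  also have "\<dots> < \<infinity>"
    using integrableD(2)[OF mom] by (simp add: top.not_eq_extremum)
  finally show ?thesis .
qed

lemma qdiff_sq_nn_integral_finite:
  assumes F: "strict_cdf F" "integrable (interval_measure F) (\<lambda>x. x\<^sup>2)"
    and G: "strict_cdf G" "integrable (interval_measure G) (\<lambda>x. x\<^sup>2)"
  shows "(\<integral>\<^sup>+u. ennreal ((qdiff F G u)\<^sup>2) \<partial>lborel) < \<infinity>"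
proof -
  define QF where "QF u = (if u \<in> {0<..<1} then qinv F u else 0)" for u
  define QG where "QG u = (if u \<in> {0<..<1} then qinv G u else 0)" for u
  note [measurable] = borel_measurable_qinv[OF F(1), folded QF_def] borel_measurable_qinv[OF G(1), folded QG_def]
  have "(a - b)\<^sup>2 \<le> 2 * a\<^sup>2 + 2 * b\<^sup>2" for a b :: real
    using sum_squares_ge_zero[of "a + b" 0] by (simp add: power2_eq_square algebra_simps)
  then have "ennreal ((qdiff F G u)\<^sup>2) \<le> ennreal (2 * (QF u)\<^sup>2 + 2 * (QG u)\<^sup>2)" for u
    by (intro ennreal_leI) (simp add: qdiff_def QF_def QG_def)
  then have "(\<integral>\<^sup>+u. ennreal ((qdiff F G u)\<^sup>2) \<partial>lborel) \<le> (\<integral>\<^sup>+u. 2 * ennreal ((QF u)\<^sup>2) + 2 * ennreal ((QG u)\<^sup>2) \<partial>lborel)"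
    by (intro nn_integral_mono) (simp add: ennreal_plus ennreal_mult)
  also have "\<dots> = 2 * (\<integral>\<^sup>+u. ennreal ((QF u)\<^sup>2) \<partial>lborel) + 2 * (\<integral>\<^sup>+u. ennreal ((QG u)\<^sup>2) \<partial>lborel)"
    by (simp add: nn_integral_add nn_integral_cmult)
  also have "(\<integral>\<^sup>+u. ennreal ((QF u)\<^sup>2) \<partial>lborel) = (\<integral>\<^sup>+u\<in>{0<..<1}. ennreal ((qinv F u)\<^sup>2) \<partial>lborel)"
    by (intro nn_integral_cong) (simp add: QF_def indicator_def)
  also have "(\<integral>\<^sup>+u. ennreal ((QG u)\<^sup>2) \<partial>lborel) = (\<integral>\<^sup>+u\<in>{0<..<1}. ennreal ((qinv G u)\<^sup>2) \<partial>lborel)"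
    by (intro nn_integral_cong) (simp add: QG_def indicator_def)
  also have "2 * (\<integral>\<^sup>+u\<in>{0<..<1}. ennreal ((qinv F u)\<^sup>2) \<partial>lborel)
      + 2 * (\<integral>\<^sup>+u\<in>{0<..<1}. ennreal ((qinv G u)\<^sup>2) \<partial>lborel) < \<infinity>"
    using qinv_sq_nn_integral_finite[OF F] qinv_sq_nn_integral_finite[OF G]
    by (simp add: ennreal_mult_less_top)
  finally show ?thesis .
qed

lemma W2_eq_qdiff: "W2 F G = sqrt (\<integral>u. (qdiff F G u)\<^sup>2 \<partial>lborel)"
  unfolding W2_def set_lebesgue_integral_def
  by (intro arg_cong[where f=sqrt] Bochner_Integration.integral_cong) (auto simp: qdiff_def indicator_def)

lemma epsW2_eq_qdiff:
  "epsW2 F G = (if W2 F G = 0 then 0 else (\<integral>u. (max (qdiff F G u) 0)\<^sup>2 \<partial>lborel) / (W2 F G)\<^sup>2)"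
proof -
  have "(LINT u:{u\<in>{0<..<1::real}. qinv F u > qinv G u}|lborel. (qinv F u - qinv G u)\<^sup>2)
      = (\<integral>u. (max (qdiff F G u) 0)\<^sup>2 \<partial>lborel)"
    unfolding set_lebesgue_integral_def
    by (intro Bochner_Integration.integral_cong) (auto simp: qdiff_def indicator_def max_def)
  then show ?thesis unfolding epsW2_def by simp
qed

lemma epsW2_le:
  assumes F: "strict_cdf F" "strict_cdf G" and \<rho>: "0 \<le> \<rho>"
    and bound: "(\<integral>\<^sup>+u. ennreal ((max (qdiff F G u) 0)\<^sup>2) \<partial>lborel)
       \<le> ennreal \<rho> * (\<integral>\<^sup>+u. ennreal ((qdiff F G u)\<^sup>2) \<partial>lborel)"
  shows "0 \<le> epsW2 F G" "epsW2 F G \<le> \<rho>"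
proof -
  note [measurable] = borel_measurable_qdiff[OF F]
  define f where "f = (\<lambda>u. (qdiff F G u)\<^sup>2)"
  define fp where "fp = (\<lambda>u. (max (qdiff F G u) 0)\<^sup>2)"
  have f: "0 \<le> fp u" "fp u \<le> f u" for u by (auto simp: f_def fp_def max_def)
  have fp_m: "fp \<in> borel_measurable borel" unfolding fp_def by measurable
  have "0 \<le> epsW2 F G \<and> epsW2 F G \<le> \<rho>"
  proof (cases "integrable lborel f \<and> W2 F G \<noteq> 0")
    case True
    then have int: "integrable lborel f" "integrable lborel fp"
      using f fp_m by (auto intro: Bochner_Integration.integrable_bound[of lborel f fp] simp: f_def)
    have "0 \<le> integral\<^sup>L lborel f" by (simp add: f_def)
    then have pos: "0 < integral\<^sup>L lborel f" and W: "(W2 F G)\<^sup>2 = integral\<^sup>L lborel f"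
      using True by (auto simp: W2_eq_qdiff f_def less_le)
    have "ennreal (integral\<^sup>L lborel fp) \<le> ennreal (\<rho> * integral\<^sup>L lborel f)"
      using bound int f \<rho> pos
      by (simp add: f_def fp_def nn_integral_eq_integral ennreal_mult less_imp_le)
    then have "integral\<^sup>L lborel fp \<le> \<rho> * integral\<^sup>L lborel f"
      using \<rho> pos by (simp add: ennreal_le_iff)
    then show ?thesis
      using True W pos f by (simp add: epsW2_eq_qdiff fp_def divide_le_eq)
  next
    case False
    then have "W2 F G = 0" by (auto simp: W2_eq_qdiff f_def not_integrable_integral_eq)
    then show ?thesis using \<rho> by (simp add: epsW2_def)
  qed
  then show "0 \<le> epsW2 F G" "epsW2 F G \<le> \<rho>" by auto
qed

section \<open>Beta kernels and the derivative of \<open>phi\<close>\<close>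

definition beta_kernel :: "nat \<Rightarrow> nat \<Rightarrow> real \<Rightarrow> real" where
  "beta_kernel p q t = t ^ p * (1 - t) ^ q"

lemma beta_kernel_nonneg: "0 \<le> t \<Longrightarrow> t \<le> 1 \<Longrightarrow> 0 \<le> beta_kernel p q t"
  unfolding beta_kernel_def by simp

lemma beta_kernel_pos: "0 < t \<Longrightarrow> t < 1 \<Longrightarrow> 0 < beta_kernel p q t"
  unfolding beta_kernel_def by simp

lemma beta_kernel_reflect: "beta_kernel p q (1 - t) = beta_kernel q p t"
  unfolding beta_kernel_def by simp

lemma continuous_on_beta_kernel: "continuous_on A (beta_kernel p q)"
  unfolding beta_kernel_def by (intro continuous_intros)

lemma borel_measurable_beta_kernel [measurable]: "beta_kernel p q \<in> borel_measurable borel"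
  by (intro borel_measurable_continuous_onI continuous_on_beta_kernel)

lemma beta_kernel_has_real_derivative:
  "(beta_kernel (Suc p) (Suc q) has_real_derivative
     beta_kernel p q t * (real (Suc p) * (1 - t) - real (Suc q) * t)) (at t)"
  unfolding beta_kernel_def by (rule derivative_eq_intros refl)+ (simp add: algebra_simps)

lemma beta_kernel_mono:
  assumes p: "1 \<le> p" and vw: "0 \<le> v" "v \<le> w" and w: "w * real (p + q) \<le> real p"
  shows "beta_kernel p q v \<le> beta_kernel p q w"
proof (cases q)
  case 0
  then show ?thesis using vw by (simp add: beta_kernel_def power_mono)
next
  case (Suc q')
  obtain p' where p': "p = Suc p'" using p by (cases p) auto
  have "w * real (p + q) \<le> 1 * real (p + q)" using w by simp
  then have "w \<le> 1" using p by (simp add: mult_le_cancel_right)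
  show ?thesis
  proof (rule DERIV_nonneg_imp_increasing_open[OF vw(2)])
    fix x assume x: "v < x" "x < w"
    have "x * real (p + q) \<le> real p"
      using w mult_right_mono[of x w "real (p + q)"] x by linarith
    then have "0 \<le> real (Suc p') * (1 - x) - real (Suc q') * x"
      using p' Suc by (simp add: algebra_simps)
    moreover have "0 \<le> beta_kernel p' q' x"
      using x vw \<open>w \<le> 1\<close> by (intro beta_kernel_nonneg) auto
    ultimately show "\<exists>y. (beta_kernel p q has_real_derivative y) (at x) \<and> 0 \<le> y"
      unfolding p' Suc using beta_kernel_has_real_derivative[of p' q' x] by (blast intro: mult_nonneg_nonneg)
  qed (rule continuous_on_beta_kernel)
qed

lemma binomial_term_has_real_derivative:
  assumes "1 \<le> m" "m < n"
  shows "((\<lambda>t. real (n choose m) * t ^ m * (1 - t) ^ (n - m)) has_real_derivative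
     real n * real ((n - 1) choose (m - 1)) * beta_kernel (m - 1) (n - m) t
     - real n * real ((n - 1) choose m) * beta_kernel m (n - m - 1) t) (at t)"
proof -
  obtain s where s: "m = Suc s" using assms(1) by (cases m) auto
  obtain r where r: "n - m = Suc r" using assms(2) by (cases "n - m") auto
  have "m * (n choose m) = n * ((n - 1) choose (m - 1))"
    using times_binomial_minus1_eq[of m n] assms by simp
  then have c1: "real m * real (n choose m) = real n * real ((n - 1) choose (m - 1))"
    by (metis of_nat_mult)
  have "Suc r * (n choose m) = n * ((n - 1) choose m)"
    using binomial_absorb_comp[of n m] r by simp
  then have c2: "real (Suc r) * real (n choose m) = real n * real ((n - 1) choose m)"
    by (metis of_nat_mult)
  have "((\<lambda>t. real (n choose m) * t ^ m * (1 - t) ^ (n - m)) has_real_derivative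
      real (n choose m) * (real m * t ^ s * (1 - t) ^ Suc r - t ^ m * (real (Suc r) * (1 - t) ^ r))) (at t)"
    unfolding r s by (rule derivative_eq_intros refl)+ (use r s in \<open>simp add: algebra_simps\<close>)
  also have "real (n choose m) * (real m * t ^ s * (1 - t) ^ Suc r - t ^ m * (real (Suc r) * (1 - t) ^ r))
    = (real m * real (n choose m)) * beta_kernel s (Suc r) t - (real (Suc r) * real (n choose m)) * beta_kernel m r t"
    unfolding beta_kernel_def by (simp only: algebra_simps)
  finally show ?thesis
    unfolding c1 c2 using r s by simp
qed

lemma binomial_tail_has_real_derivative:
  assumes "1 \<le> k" "k \<le> n"
  shows "((\<lambda>t. \<Sum>j=k..n. real (n choose j) * t ^ j * (1 - t) ^ (n - j)) has_real_derivative
          real n * real ((n - 1) choose (k - 1)) * beta_kernel (k - 1) (n - k) t) (at t)"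
  using assms(2,1)
proof (induction k rule: inc_induct)
  case base
  show ?case by (rule derivative_eq_intros refl)+ (simp add: beta_kernel_def)
next
  case (step m)
  have "(\<lambda>t. \<Sum>j=m..n. real (n choose j) * t ^ j * (1 - t) ^ (n - j)) =
     (\<lambda>t. real (n choose m) * t ^ m * (1 - t) ^ (n - m) + (\<Sum>j=Suc m..n. real (n choose j) * t ^ j * (1 - t) ^ (n - j)))"
    using step(2) by (intro ext) (simp add: sum.atLeast_Suc_atMost)
  moreover have "n - Suc m = n - m - 1" by simp
  ultimately show ?case
    using DERIV_add[OF binomial_term_has_real_derivative[OF step(4,2)] step(3)] by simp
qed

lemma weighted_log_ratio_neg:
  fixes c b g :: real
  assumes c: "0 < c" "c < b" and bg: "b < g" "g \<le> 1"
  shows "g * ln (c / b) + (1 - g) * ln ((1 - c) / (1 - b)) < 0"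
proof -
  define x where "x = c / b"
  define y where "y = (1 - c) / (1 - b)"
  define s where "s = g * x + (1 - g) * y"
  have b1: "0 < b" "b < 1" using bg c by auto
  have xy: "0 < x" "0 < y" using c b1 by (auto simp: x_def y_def)
  moreover have "0 < g" using bg b1 by simp
  ultimately have s0: "0 < s" using bg unfolding s_def by (simp add: add_pos_nonneg)
  have "s * (b * (1 - b)) = b * (1 - b) + (c - b) * (g - b)"
    unfolding s_def x_def y_def using b1 by (simp add: field_simps)
  also have "\<dots> < 1 * (b * (1 - b))" using c bg by (simp add: mult_neg_pos)
  finally have s1: "s < 1" using b1 by (simp add: mult_less_cancel_right)
  \<comment> \<open>tangent line of \<open>ln\<close> at \<open>s\<close>\<close>
  have tangent: "ln z \<le> z / s - 1 + ln s" if "0 < z" for z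
    using ln_le_minus_one[of "z / s"] that s0 by (simp add: ln_div)
  have "g * ln x + (1 - g) * ln y \<le> g * (x / s - 1 + ln s) + (1 - g) * (y / s - 1 + ln s)"
    using mult_left_mono[OF tangent[OF xy(1)], of g] mult_left_mono[OF tangent[OF xy(2)], of "1 - g"] bg b1
    by linarith
  also have "\<dots> = (g * x + (1 - g) * y) / s - 1 + ln s" using s0 by (simp add: field_simps)
  also have "\<dots> = ln s" using s0 by (simp add: s_def)
  also have "\<dots> < 0" using s0 s1 by simp
  finally show ?thesis by (simp add: x_def y_def)
qed

lemma beta_kernel_ratio_eq_exp:
  assumes "0 < c" "0 < b" "b < 1" "c < 1" "0 < P + Q"
  shows "beta_kernel P Q c / beta_kernel P Q b = exp (real (P + Q) *
    (real P / real (P + Q) * ln (c / b) + (1 - real P / real (P + Q)) * ln ((1 - c) / (1 - b))))"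
proof -
  have m: "real (P + Q) \<noteq> 0" using assms(5) by (simp only: of_nat_eq_0_iff)
  then have "1 - real P / real (P + Q) = real Q / real (P + Q)" by (simp add: field_simps)
  moreover have "m * (p / m * A + q / m * B) = p * A + q * B" if "m \<noteq> 0" for m p q A B :: real
    using that by (simp add: field_simps)
  ultimately have "real (P + Q) * (real P / real (P + Q) * ln (c / b) + (1 - real P / real (P + Q)) * ln ((1 - c) / (1 - b)))
      = real P * ln (c / b) + real Q * ln ((1 - c) / (1 - b))"
    using m by presburger
  moreover have "beta_kernel P Q c / beta_kernel P Q b = (c / b) ^ P * ((1 - c) / (1 - b)) ^ Q"
    unfolding beta_kernel_def by (simp add: power_divide)
  ultimately show ?thesis using assms by (simp add: exp_add ln_realpow[symmetric])
qed

text \<open>The ratio is \<open>exp ((P + Q) L\<^sub>n)\<close>, where \<open>L\<^sub>n\<close> tends to the negative quantity of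
  \<open>weighted_log_ratio_neg\<close>.\<close>

lemma beta_kernel_ratio_tendsto_0:
  fixes P Q :: "nat \<Rightarrow> nat"
  assumes c: "0 < c" "c < b" and bg: "b < g" "g \<le> 1"
    and mode: "((\<lambda>n. real (P n) / real (P n + Q n)) \<longlongrightarrow> g) sequentially"
    and size: "filterlim (\<lambda>n. real (P n + Q n)) at_top sequentially"
  shows "((\<lambda>n. beta_kernel (P n) (Q n) c / beta_kernel (P n) (Q n) b) \<longlongrightarrow> 0) sequentially"
proof -
  define L where "L = g * ln (c / b) + (1 - g) * ln ((1 - c) / (1 - b))"
  have L: "L < 0" unfolding L_def by (rule weighted_log_ratio_neg[OF c bg])
  define \<kappa> where "\<kappa> n = real (P n) / real (P n + Q n)" for n
  have "((\<lambda>n. \<kappa> n * ln (c / b) + (1 - \<kappa> n) * ln ((1 - c) / (1 - b))) \<longlongrightarrow> L) sequentially"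
    unfolding L_def \<kappa>_def by (intro tendsto_intros mode)
  then have ev_L: "\<forall>\<^sub>F n in sequentially. \<kappa> n * ln (c / b) + (1 - \<kappa> n) * ln ((1 - c) / (1 - b)) < L / 2"
    using L by (intro order_tendstoD(2)) auto
  have ev_pos: "\<forall>\<^sub>F n in sequentially. 0 < real (P n + Q n)"
    using size by (simp add: filterlim_at_top_dense)
  have "filterlim (\<lambda>n. L / 2 * real (P n + Q n)) at_bot sequentially"
    using L by (intro filterlim_tendsto_neg_mult_at_bot[OF tendsto_const _ size]) auto
  then have lim: "((\<lambda>n. exp (L / 2 * real (P n + Q n))) \<longlongrightarrow> 0) sequentially"
    by (rule filterlim_compose[OF exp_at_bot])
  have "\<forall>\<^sub>F n in sequentially. 0 \<le> beta_kernel (P n) (Q n) c / beta_kernel (P n) (Q n) b \<and>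
      beta_kernel (P n) (Q n) c / beta_kernel (P n) (Q n) b \<le> exp (L / 2 * real (P n + Q n))"
    using ev_L ev_pos
  proof eventually_elim
    case (elim n)
    have "beta_kernel (P n) (Q n) c / beta_kernel (P n) (Q n) b
        = exp (real (P n + Q n) * (\<kappa> n * ln (c / b) + (1 - \<kappa> n) * ln ((1 - c) / (1 - b))))"
      unfolding \<kappa>_def using elim c bg by (intro beta_kernel_ratio_eq_exp) auto
    also have "\<dots> \<le> exp (L / 2 * real (P n + Q n))"
      using elim by (subst exp_le_cancel_iff) (simp add: mult.commute mult_left_mono)
    finally show ?case
      using c bg by (simp add: beta_kernel_nonneg)
  qed
  then show ?thesis
    by (intro tendsto_sandwich[OF _ _ tendsto_const lim]) (auto elim: eventually_mono)
qed

lemma beta_kernel_le_ratio_mult: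
  assumes p: "1 \<le> p" and v: "0 \<le> v" "v \<le> c" and c: "c < b" "b < 1"
    and w: "b \<le> w" "w * real (p + q) \<le> real p"
  shows "beta_kernel p q v \<le> beta_kernel p q c / beta_kernel p q b * beta_kernel p q w"
proof -
  have mode: "z * real (p + q) \<le> real p" if "z \<le> w" for z
    using mult_right_mono[OF that, of "real (p + q)"] w(2) by linarith
  have K: "0 < beta_kernel p q b" "0 \<le> beta_kernel p q c"
    using v c by (auto intro: beta_kernel_pos beta_kernel_nonneg)
  have "beta_kernel p q v \<le> beta_kernel p q c"
    using v c w by (intro beta_kernel_mono[OF p] mode) auto
  also have "\<dots> = beta_kernel p q c / beta_kernel p q b * beta_kernel p q b"
    using K by simp
  also have "\<dots> \<le> beta_kernel p q c / beta_kernel p q b * beta_kernel p q w"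
    using v c w K by (intro mult_left_mono beta_kernel_mono[OF p] mode) auto
  finally show ?thesis .
qed

lemma beta_kernel_dominated_below:
  fixes P Q :: "nat \<Rightarrow> nat"
  assumes c: "0 \<le> c" "c < b1" and b: "b1 \<le> b2" "b2 < g" "g \<le> 1"
    and mode: "((\<lambda>n. real (P n) / real (P n + Q n)) \<longlongrightarrow> g) sequentially"
    and size: "filterlim (\<lambda>n. real (P n + Q n)) at_top sequentially"
  shows "\<exists>r. (r \<longlongrightarrow> 0) sequentially \<and> (\<forall>n. 0 \<le> r n) \<and>
    (\<forall>\<^sub>F n in sequentially. \<forall>v\<in>{0..c}. \<forall>w\<in>{b1..b2}.
    beta_kernel (P n) (Q n) v \<le> r n * beta_kernel (P n) (Q n) w)"
proof (intro exI conjI)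
  \<comment> \<open>compare at \<open>c' > 0\<close> rather than at \<open>c\<close>, which may be \<open>0\<close>\<close>
  define c' where "c' = (c + b1) / 2"
  have c': "0 < c'" "c < c'" "c' < b1" using c unfolding c'_def by auto
  show "((\<lambda>n. beta_kernel (P n) (Q n) c' / beta_kernel (P n) (Q n) b1) \<longlongrightarrow> 0) sequentially"
    using c' b by (intro beta_kernel_ratio_tendsto_0[OF _ _ _ _ mode size]) auto
  show "\<forall>n. 0 \<le> beta_kernel (P n) (Q n) c' / beta_kernel (P n) (Q n) b1"
    using c' b by (simp add: beta_kernel_nonneg)
  have "\<forall>\<^sub>F n in sequentially. b2 < real (P n) / real (P n + Q n)"
    using order_tendstoD(1)[OF mode b(2)] .
  moreover have "\<forall>\<^sub>F n in sequentially. 0 < real (P n + Q n)"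
    using size by (simp add: filterlim_at_top_dense)
  ultimately show "\<forall>\<^sub>F n in sequentially. \<forall>v\<in>{0..c}. \<forall>w\<in>{b1..b2}. beta_kernel (P n) (Q n) v
      \<le> beta_kernel (P n) (Q n) c' / beta_kernel (P n) (Q n) b1 * beta_kernel (P n) (Q n) w"
  proof eventually_elim
    case (elim n)
    then have mode_n: "w * real (P n + Q n) \<le> real (P n)" if "w \<le> b2" for w
      using mult_right_mono[OF that, of "real (P n + Q n)"] by (simp add: field_simps)
    have "0 < b2 * real (P n + Q n)" using c b elim by simp
    then have "1 \<le> P n" using mode_n[of b2] by simp
    then show ?case
      using c c' b mode_n by (intro ballI beta_kernel_le_ratio_mult) auto
  qed
qed

lemma beta_kernel_dominated_above:
  fixes P Q :: "nat \<Rightarrow> nat"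
  assumes g: "0 \<le> g" "g < b1" and b: "b1 \<le> b2" "b2 < d" "d \<le> 1"
    and mode: "((\<lambda>n. real (P n) / real (P n + Q n)) \<longlongrightarrow> g) sequentially"
    and size: "filterlim (\<lambda>n. real (P n + Q n)) at_top sequentially"
  shows "\<exists>r. (r \<longlongrightarrow> 0) sequentially \<and> (\<forall>n. 0 \<le> r n) \<and>
    (\<forall>\<^sub>F n in sequentially. \<forall>v\<in>{d..1}. \<forall>w\<in>{b1..b2}.
    beta_kernel (P n) (Q n) v \<le> r n * beta_kernel (P n) (Q n) w)"
proof -
  have "\<forall>\<^sub>F n in sequentially. 0 < real (P n + Q n)"
    using size by (simp add: filterlim_at_top_dense)
  then have "\<forall>\<^sub>F n in sequentially. 1 - real (P n) / real (P n + Q n) = real (Q n) / real (Q n + P n)"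
    by eventually_elim (simp add: field_simps)
  moreover have "((\<lambda>n. 1 - real (P n) / real (P n + Q n)) \<longlongrightarrow> 1 - g) sequentially"
    by (intro tendsto_intros mode)
  ultimately have mode': "((\<lambda>n. real (Q n) / real (Q n + P n)) \<longlongrightarrow> 1 - g) sequentially"
    by (rule Lim_transform_eventually[rotated])
  obtain r where r: "(r \<longlongrightarrow> 0) sequentially" "\<forall>n. 0 \<le> r n"
    and ev: "\<forall>\<^sub>F n in sequentially. \<forall>v\<in>{0..1 - d}. \<forall>w\<in>{1 - b2..1 - b1}.
      beta_kernel (Q n) (P n) v \<le> r n * beta_kernel (Q n) (P n) w"
    using beta_kernel_dominated_below[of "1 - d" "1 - b2" "1 - b1" "1 - g" Q P, OF _ _ _ _ _ mode'] g b size
    by (auto simp: add.commute)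
  have "\<forall>\<^sub>F n in sequentially. \<forall>v\<in>{d..1}. \<forall>w\<in>{b1..b2}.
      beta_kernel (P n) (Q n) v \<le> r n * beta_kernel (P n) (Q n) w"
    using ev
  proof eventually_elim
    case (elim n)
    show ?case
    proof (intro ballI)
      fix v w assume "v \<in> {d..1}" "w \<in> {b1..b2}"
      then have "beta_kernel (Q n) (P n) (1 - v) \<le> r n * beta_kernel (Q n) (P n) (1 - w)"
        using elim by auto
      then show "beta_kernel (P n) (Q n) v \<le> r n * beta_kernel (P n) (Q n) w"
        by (simp add: beta_kernel_reflect)
    qed
  qed
  then show ?thesis using r by blast
qed

definition order_index :: "nat \<Rightarrow> real \<Rightarrow> nat" where
  "order_index n a = 1 + nat \<lfloor>real (n - 1) * a\<rfloor>"

definition dphi :: "nat \<Rightarrow> real \<Rightarrow> real \<Rightarrow> real" where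
  "dphi n a t = real n * real ((n - 1) choose (order_index n a - 1)) *
     beta_kernel (order_index n a - 1) (n - order_index n a) t"

lemma one_le_order_index: "1 \<le> order_index n a"
  by (simp add: order_index_def)

lemma order_index_le:
  assumes "a \<le> 1" "1 \<le> n"
  shows "order_index n a \<le> n"
proof -
  have "real (n - 1) * a \<le> real (n - 1)" using assms by (simp add: mult_left_le)
  then have "nat \<lfloor>real (n - 1) * a\<rfloor> \<le> n - 1" by linarith
  then show ?thesis using assms(2) by (simp add: order_index_def)
qed

lemma phi_eq_binomial_tail:
  "phi n a t = (\<Sum>j = order_index n a .. n. real (n choose j) * t ^ j * (1 - t) ^ (n - j))"
  by (simp add: phi_def order_index_def)

lemma phi_has_real_derivative:
  assumes "a \<le> 1" "1 \<le> n"
  shows "(phi n a has_real_derivative dphi n a t) (at t)"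
  unfolding phi_eq_binomial_tail[abs_def] dphi_def
  by (intro binomial_tail_has_real_derivative one_le_order_index order_index_le assms)

lemma phi_at_0: "a \<le> 1 \<Longrightarrow> 1 \<le> n \<Longrightarrow> phi n a 0 = 0"
  unfolding phi_eq_binomial_tail by (intro sum.neutral) (auto simp: order_index_def)

lemma phi_at_1:
  assumes "a \<le> 1" "1 \<le> n"
  shows "phi n a 1 = 1"
proof -
  have "phi n a 1 = (\<Sum>j = order_index n a .. n. if j = n then 1 else 0)"
    unfolding phi_eq_binomial_tail by (intro sum.cong) auto
  then show ?thesis using order_index_le[OF assms] by simp
qed

lemma dphi_pos:
  assumes "a \<le> 1" "1 \<le> n" "0 < t" "t < 1"
  shows "0 < dphi n a t"
  using order_index_le[OF assms(1,2)] assms(2-4) by (simp add: dphi_def beta_kernel_pos order_index_def)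

lemma dphi_nonneg: "0 \<le> t \<Longrightarrow> t \<le> 1 \<Longrightarrow> 0 \<le> dphi n a t"
  by (simp add: dphi_def beta_kernel_nonneg)

lemma continuous_on_dphi: "continuous_on A (dphi n a)"
  unfolding dphi_def by (intro continuous_intros continuous_on_beta_kernel)

text \<open>The kernel of the order statistic of rank \<open>order_index n a\<close> has mode \<open>\<lfloor>(n - 1) a\<rfloor> / (n - 1)\<close>,
  which follows \<open>a\<close> up to \<open>1 / (n - 1)\<close>.\<close>

lemma order_index_mode_tendsto:
  fixes a :: "nat \<Rightarrow> real"
  assumes lim: "(a \<longlongrightarrow> g) sequentially" and a: "\<And>n. 0 \<le> a n" "\<And>n. a n \<le> 1"
  defines "P \<equiv> \<lambda>n. order_index n (a n) - 1" and "Q \<equiv> \<lambda>n. n - order_index n (a n)"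
  shows "((\<lambda>n. real (P n) / real (P n + Q n)) \<longlongrightarrow> g) sequentially"
    and "filterlim (\<lambda>n. real (P n + Q n)) at_top sequentially"
proof -
  have size: "\<forall>\<^sub>F n in sequentially. real (P n + Q n) = real n - 1"
    using eventually_ge_at_top[of "1::nat"]
    by eventually_elim (use order_index_le[OF a(2)] in \<open>auto simp: P_def Q_def order_index_def of_nat_diff\<close>)
  have "filterlim (\<lambda>n. - 1 + real n) at_top sequentially"
    by (rule filterlim_tendsto_add_at_top[OF tendsto_const filterlim_real_sequentially])
  then show "filterlim (\<lambda>n. real (P n + Q n)) at_top sequentially"
    by (rule filterlim_cong[THEN iffD1, rotated 3]) (use size in \<open>auto elim: eventually_mono\<close>)
  have bounds: "\<forall>\<^sub>F n in sequentially. a n - 2 / real n \<le> real (P n) / real (P n + Q n) \<and>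
      real (P n) / real (P n + Q n) \<le> a n"
    using size eventually_ge_at_top[of "2::nat"]
  proof eventually_elim
    case (elim n)
    define m where "m = real n - 1"
    have m: "1 \<le> m" "real (n - 1) = m" using elim by (simp_all add: m_def of_nat_diff)
    have P: "real (P n) = of_int \<lfloor>m * a n\<rfloor>"
      using m a by (simp add: P_def order_index_def flip: m(2))
    have "(m * a n - 1) / m \<le> of_int \<lfloor>m * a n\<rfloor> / m" "of_int \<lfloor>m * a n\<rfloor> / m \<le> m * a n / m"
      using m by (intro divide_right_mono; linarith)+
    moreover have "1 / m \<le> 2 / real n" using m(1) elim(2) by (simp add: m_def field_simps)
    ultimately show ?case
      using m(1) elim(1) by (simp add: P m_def[symmetric] diff_divide_distrib)
  qed
  have "((\<lambda>n. a n - 2 / real n) \<longlongrightarrow> g) sequentially"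
    using tendsto_diff[OF lim tendsto_mult_left[OF lim_1_over_n, of 2]] by simp
  then show "((\<lambda>n. real (P n) / real (P n + Q n)) \<longlongrightarrow> g) sequentially"
    using bounds[unfolded eventually_conj_iff] lim by (elim conjE tendsto_sandwich)
qed

lemma tendsto_of_bigo_inverse:
  fixes f :: "nat \<Rightarrow> real"
  assumes "(\<lambda>n. f n - c) \<in> O(\<lambda>n. 1 / real n)"
  shows "(f \<longlongrightarrow> c) sequentially"
proof -
  have "(\<lambda>n. 1 / real n) \<in> o(\<lambda>n. 1)"
    by (rule smalloI_tendsto) (use lim_1_over_n in auto)
  then have "(\<lambda>n. f n - c) \<in> o(\<lambda>n. 1)" using assms by (rule landau_o.big_small_trans[rotated])
  then have "((\<lambda>n. (f n - c) + c) \<longlongrightarrow> 0 + c) sequentially"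
    using smalloD_tendsto by (fastforce intro: tendsto_add)
  then show ?thesis by simp
qed

section \<open>Distorting distribution functions\<close>

definition smooth_distortion :: "(real \<Rightarrow> real) \<Rightarrow> (real \<Rightarrow> real) \<Rightarrow> bool" where
  "smooth_distortion \<psi> \<psi>' \<longleftrightarrow> (\<forall>t. (\<psi> has_real_derivative \<psi>' t) (at t)) \<and>
     continuous_on {0..1} \<psi>' \<and> (\<forall>t\<in>{0..1}. 0 \<le> \<psi>' t) \<and> (\<forall>t\<in>{0<..<1}. 0 < \<psi>' t) \<and>
     \<psi> 0 = 0 \<and> \<psi> 1 = 1"

lemma smooth_distortion_less:
  assumes "smooth_distortion \<psi> \<psi>'" "0 \<le> x" "x < y" "y \<le> 1"
  shows "\<psi> x < \<psi> y"
proof (rule DERIV_pos_imp_increasing_open[OF assms(3)])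
  show "\<exists>w. (\<psi> has_real_derivative w) (at z) \<and> 0 < w" if "x < z" "z < y" for z
    using assms that unfolding smooth_distortion_def by force
  show "continuous_on {x..y} \<psi>"
    using assms(1) unfolding smooth_distortion_def by (meson DERIV_continuous continuous_at_imp_continuous_on)
qed

lemma smooth_distortion_range:
  assumes "smooth_distortion \<psi> \<psi>'" "0 < v" "v < 1"
  shows "0 < \<psi> v" "\<psi> v < 1"
  using smooth_distortion_less[OF assms(1), of 0 v] smooth_distortion_less[OF assms(1), of v 1] assms
  unfolding smooth_distortion_def by auto

lemma strict_cdf_distortion:
  assumes \<psi>: "smooth_distortion \<psi> \<psi>'" and F: "strict_cdf F"
  shows "strict_cdf (\<psi> \<circ> F)"
proof -
  have cont: "isCont \<psi> z" for z
    using \<psi> unfolding smooth_distortion_def by (meson DERIV_isCont)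
  have F': "continuous_on UNIV F" "(F \<longlongrightarrow> 0) at_bot" "(F \<longlongrightarrow> 1) at_top"
    using F unfolding strict_cdf_def by auto
  have "strict_mono (\<psi> \<circ> F)"
  proof (rule strict_monoI)
    fix x y :: real assume "x < y"
    then show "(\<psi> \<circ> F) x < (\<psi> \<circ> F) y"
      using smooth_distortion_less[OF \<psi>, of "F x" "F y"] strict_cdf_less_iff[OF F, of x y]
        strict_cdf_pos[OF F, of x] strict_cdf_less_1[OF F, of y] by simp
  qed
  moreover have "continuous_on UNIV (\<psi> \<circ> F)"
    using continuous_on_compose[OF F'(1), of \<psi>] cont by (simp add: continuous_at_imp_continuous_on)
  moreover have "((\<psi> \<circ> F) \<longlongrightarrow> 0) at_bot" "((\<psi> \<circ> F) \<longlongrightarrow> 1) at_top"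
    using isCont_tendsto_compose[OF cont F'(2)] isCont_tendsto_compose[OF cont F'(3)] \<psi>
    by (simp_all add: smooth_distortion_def comp_def)
  ultimately show ?thesis unfolding strict_cdf_def by blast
qed

lemma qdiff_distortion:
  assumes \<psi>: "smooth_distortion \<psi> \<psi>'" and F: "strict_cdf F" "strict_cdf G" and v: "0 \<le> v" "v \<le> 1"
  shows "qdiff (\<psi> \<circ> F) (\<psi> \<circ> G) (\<psi> v) = qdiff F G v"
proof (cases "v \<in> {0<..<1}")
  case True
  have "qinv (\<psi> \<circ> H) (\<psi> v) = qinv H v" if "strict_cdf H" for H
    using True cdf_qinv[OF that] by (intro qinv_eqI strict_cdf_distortion[OF \<psi> that]) auto
  then show ?thesis using True smooth_distortion_range[OF \<psi>] F by (simp add: qdiff_def)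
next
  case False
  then have "v = 0 \<or> v = 1" using v by auto
  then show ?thesis using \<psi> by (auto simp: qdiff_def smooth_distortion_def)
qed

text \<open>Change of variables \<open>u = \<psi> v\<close>: quantiles of distorted distribution functions are the old
  quantiles reparametrised, so integrals against \<open>du\<close> become integrals against \<open>\<psi>' v dv\<close>.\<close>

lemma nn_integral_qdiff_distortion:
  assumes \<psi>: "smooth_distortion \<psi> \<psi>'" and F: "strict_cdf F" "strict_cdf G"
    and h: "continuous_on UNIV h" "h 0 = 0"
  shows "(\<integral>\<^sup>+u. ennreal (h (qdiff (\<psi> \<circ> F) (\<psi> \<circ> G) u)) \<partial>lborel)
       = (\<integral>\<^sup>+v. ennreal (h (qdiff F G v) * \<psi>' v) \<partial>lborel)"
proof -
  note [measurable] = borel_measurable_continuous_onI[OF h(1)]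
    borel_measurable_qdiff[OF strict_cdf_distortion[OF \<psi> F(1)] strict_cdf_distortion[OF \<psi> F(2)]]
  have vanish: "h (qdiff H K u) = 0" if "u \<notin> {0<..<1}" for H K u
    using that h(2) unfolding qdiff_def by auto
  define f where "f u = h (qdiff (\<psi> \<circ> F) (\<psi> \<circ> G) u)" for u
  have fm: "set_borel_measurable borel {0..1} f"
    unfolding set_borel_measurable_def f_def by measurable
  have "(\<integral>\<^sup>+u. ennreal (h (qdiff (\<psi> \<circ> F) (\<psi> \<circ> G) u)) \<partial>lborel)
      = (\<integral>\<^sup>+u. ennreal (f u * indicator {\<psi> 0..\<psi> 1} u) \<partial>lborel)"
    using \<psi> vanish by (intro nn_integral_cong) (auto simp: f_def smooth_distortion_def indicator_def)
  also have "\<dots> = (\<integral>\<^sup>+v. ennreal (f (\<psi> v) * \<psi>' v * indicator {0..1} v) \<partial>lborel)"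
    using \<psi> fm unfolding smooth_distortion_def by (intro nn_integral_substitution) auto
  also have "\<dots> = (\<integral>\<^sup>+v. ennreal (h (qdiff F G v) * \<psi>' v) \<partial>lborel)"
    using vanish qdiff_distortion[OF \<psi> F] by (intro nn_integral_cong) (auto simp: f_def indicator_def)
  finally show ?thesis .
qed

section \<open>Negligible positive parts\<close>

text \<open>With \<open>D = qdiff F\<^sub>X F\<^sub>Y\<close> and \<open>E n = \<phi>\<^sub>n'\<close>, the ratio of the two integrals below is
  \<open>\<epsilon>\<^sub>W\<^sub>2\<close> of the distorted distribution functions (for \<open>S = (0, 1)\<close>).\<close>

definition pos_part_negligible :: "real set \<Rightarrow> (real \<Rightarrow> real) \<Rightarrow> (nat \<Rightarrow> real \<Rightarrow> real) \<Rightarrow> bool" where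
  "pos_part_negligible S D E \<longleftrightarrow> (\<exists>\<rho>. (\<rho> \<longlongrightarrow> 0) sequentially \<and> (\<forall>n. 0 \<le> \<rho> n) \<and>
     (\<forall>\<^sub>F n in sequentially. (\<integral>\<^sup>+v\<in>S. ennreal ((max (D v) 0)\<^sup>2 * E n v) \<partial>lborel)
        \<le> ennreal (\<rho> n) * (\<integral>\<^sup>+v. ennreal ((D v)\<^sup>2 * E n v) \<partial>lborel)))"

lemma pos_part_negligible_nonpos:
  assumes "\<forall>v\<in>S. D v \<le> 0"
  shows "pos_part_negligible S D E"
proof -
  have "ennreal ((max (D v) 0)\<^sup>2 * E n v) * indicator S v = 0" for n v
    using assms by (auto simp: indicator_def max_def)
  then have "(\<integral>\<^sup>+v\<in>S. ennreal ((max (D v) 0)\<^sup>2 * E n v) \<partial>lborel) = 0" for n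
    by (simp only: nn_integral_const mult_zero_left)
  then show ?thesis unfolding pos_part_negligible_def by (intro exI[of _ "\<lambda>_. 0"]) auto
qed

lemma pos_part_negligible_subset:
  assumes "pos_part_negligible S D E" "T \<subseteq> S"
  shows "pos_part_negligible T D E"
proof -
  have "(\<integral>\<^sup>+v\<in>T. ennreal ((max (D v) 0)\<^sup>2 * E n v) \<partial>lborel)
      \<le> (\<integral>\<^sup>+v\<in>S. ennreal ((max (D v) 0)\<^sup>2 * E n v) \<partial>lborel)" for n
    using assms(2) by (intro nn_integral_mono) (auto simp: indicator_def)
  moreover obtain \<rho> where "(\<rho> \<longlongrightarrow> 0) sequentially" "\<forall>n. 0 \<le> \<rho> n"
    and ev: "\<forall>\<^sub>F n in sequentially. (\<integral>\<^sup>+v\<in>S. ennreal ((max (D v) 0)\<^sup>2 * E n v) \<partial>lborel)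
        \<le> ennreal (\<rho> n) * (\<integral>\<^sup>+v. ennreal ((D v)\<^sup>2 * E n v) \<partial>lborel)"
    using assms(1) unfolding pos_part_negligible_def by blast
  ultimately show ?thesis
    unfolding pos_part_negligible_def by (intro exI[of _ \<rho>] conjI eventually_mono[OF ev]) (auto intro: order_trans)
qed

lemma pos_part_negligible_insert:
  assumes "pos_part_negligible S D E"
  shows "pos_part_negligible (insert x S) D E"
proof -
  have "(\<integral>\<^sup>+v\<in>insert x S. ennreal ((max (D v) 0)\<^sup>2 * E n v) \<partial>lborel)
      = (\<integral>\<^sup>+v\<in>S. ennreal ((max (D v) 0)\<^sup>2 * E n v) \<partial>lborel)" for n
    by (intro nn_integral_cong_AE) (use AE_lborel_singleton[of x] in \<open>auto simp: indicator_def\<close>)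
  then show ?thesis using assms unfolding pos_part_negligible_def by simp
qed

lemma pos_part_negligible_Un:
  assumes [measurable]: "D \<in> borel_measurable borel" "\<And>n. E n \<in> borel_measurable borel"
    "S \<in> sets borel" "T \<in> sets borel"
    and "pos_part_negligible S D E" "pos_part_negligible T D E"
  shows "pos_part_negligible (S \<union> T) D E"
proof -
  obtain \<rho>\<^sub>S where \<rho>\<^sub>S: "(\<rho>\<^sub>S \<longlongrightarrow> 0) sequentially" "\<forall>n. 0 \<le> \<rho>\<^sub>S n"
    and ev\<^sub>S: "\<forall>\<^sub>F n in sequentially. (\<integral>\<^sup>+v\<in>S. ennreal ((max (D v) 0)\<^sup>2 * E n v) \<partial>lborel)
        \<le> ennreal (\<rho>\<^sub>S n) * (\<integral>\<^sup>+v. ennreal ((D v)\<^sup>2 * E n v) \<partial>lborel)"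
    using assms(5) unfolding pos_part_negligible_def by blast
  obtain \<rho>\<^sub>T where \<rho>\<^sub>T: "(\<rho>\<^sub>T \<longlongrightarrow> 0) sequentially" "\<forall>n. 0 \<le> \<rho>\<^sub>T n"
    and ev\<^sub>T: "\<forall>\<^sub>F n in sequentially. (\<integral>\<^sup>+v\<in>T. ennreal ((max (D v) 0)\<^sup>2 * E n v) \<partial>lborel)
        \<le> ennreal (\<rho>\<^sub>T n) * (\<integral>\<^sup>+v. ennreal ((D v)\<^sup>2 * E n v) \<partial>lborel)"
    using assms(6) unfolding pos_part_negligible_def by blast
  have split: "(\<integral>\<^sup>+v\<in>S \<union> T. ennreal ((max (D v) 0)\<^sup>2 * E n v) \<partial>lborel)
      \<le> (\<integral>\<^sup>+v\<in>S. ennreal ((max (D v) 0)\<^sup>2 * E n v) \<partial>lborel) + (\<integral>\<^sup>+v\<in>T. ennreal ((max (D v) 0)\<^sup>2 * E n v) \<partial>lborel)" for n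
    by (subst nn_integral_add[symmetric]) (auto intro!: nn_integral_mono simp: indicator_def)
  from ev\<^sub>S ev\<^sub>T have "\<forall>\<^sub>F n in sequentially. (\<integral>\<^sup>+v\<in>S \<union> T. ennreal ((max (D v) 0)\<^sup>2 * E n v) \<partial>lborel)
        \<le> ennreal (\<rho>\<^sub>S n + \<rho>\<^sub>T n) * (\<integral>\<^sup>+v. ennreal ((D v)\<^sup>2 * E n v) \<partial>lborel)"
  proof eventually_elim
    case (elim n)
    with split[of n] have "(\<integral>\<^sup>+v\<in>S \<union> T. ennreal ((max (D v) 0)\<^sup>2 * E n v) \<partial>lborel)
        \<le> ennreal (\<rho>\<^sub>S n) * (\<integral>\<^sup>+v. ennreal ((D v)\<^sup>2 * E n v) \<partial>lborel)
          + ennreal (\<rho>\<^sub>T n) * (\<integral>\<^sup>+v. ennreal ((D v)\<^sup>2 * E n v) \<partial>lborel)"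
      by (rule order_trans[OF _ add_mono])
    then show ?case using \<rho>\<^sub>S \<rho>\<^sub>T by (simp add: ennreal_plus distrib_right)
  qed
  then show ?thesis
    using \<rho>\<^sub>S \<rho>\<^sub>T tendsto_add[OF \<rho>\<^sub>S(1) \<rho>\<^sub>T(1)] unfolding pos_part_negligible_def
    by (intro exI[of _ "\<lambda>n. \<rho>\<^sub>S n + \<rho>\<^sub>T n"]) auto
qed

lemma nn_integral_mult_weighted_sum:
  assumes "finite I" and [measurable]: "h \<in> borel_measurable M" "\<And>i. i \<in> I \<Longrightarrow> f i \<in> borel_measurable M"
    and "\<And>i. i \<in> I \<Longrightarrow> 0 \<le> w i" "\<And>i x. i \<in> I \<Longrightarrow> 0 \<le> h x * f i x"
  shows "(\<integral>\<^sup>+x. ennreal (h x * (\<Sum>i\<in>I. w i * f i x)) \<partial>M)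
    = (\<Sum>i\<in>I. ennreal (w i) * (\<integral>\<^sup>+x. ennreal (h x * f i x) \<partial>M))"
proof -
  have "ennreal (h x * (\<Sum>i\<in>I. w i * f i x)) = ennreal (\<Sum>i\<in>I. w i * (h x * f i x))" for x
    by (simp add: sum_distrib_left mult_ac)
  also have "\<dots> x = (\<Sum>i\<in>I. ennreal (w i) * ennreal (h x * f i x))" for x
    using assms by (simp add: sum_ennreal[symmetric] ennreal_mult)
  finally have "(\<integral>\<^sup>+x. ennreal (h x * (\<Sum>i\<in>I. w i * f i x)) \<partial>M)
      = (\<integral>\<^sup>+x. (\<Sum>i\<in>I. ennreal (w i) * ennreal (h x * f i x)) \<partial>M)"
    by simp
  also have "\<dots> = (\<Sum>i\<in>I. ennreal (w i) * (\<integral>\<^sup>+x. ennreal (h x * f i x) \<partial>M))"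
    using assms by (simp add: nn_integral_sum nn_integral_cmult)
  finally show ?thesis .
qed

lemma pos_part_negligible_uniform:
  assumes "finite I" and "\<And>i. i \<in> I \<Longrightarrow> pos_part_negligible S D (K i)"
  shows "\<exists>\<rho>. (\<rho> \<longlongrightarrow> 0) sequentially \<and> (\<forall>n. 0 \<le> \<rho> n) \<and>
    (\<forall>\<^sub>F n in sequentially. \<forall>i\<in>I. (\<integral>\<^sup>+v\<in>S. ennreal ((max (D v) 0)\<^sup>2 * K i n v) \<partial>lborel)
        \<le> ennreal (\<rho> n) * (\<integral>\<^sup>+v. ennreal ((D v)\<^sup>2 * K i n v) \<partial>lborel))"
proof -
  have "\<forall>i\<in>I. \<exists>\<rho>. (\<rho> \<longlongrightarrow> 0) sequentially \<and> (\<forall>n. 0 \<le> \<rho> n) \<and>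
      (\<forall>\<^sub>F n in sequentially. (\<integral>\<^sup>+v\<in>S. ennreal ((max (D v) 0)\<^sup>2 * K i n v) \<partial>lborel)
        \<le> ennreal (\<rho> n) * (\<integral>\<^sup>+v. ennreal ((D v)\<^sup>2 * K i n v) \<partial>lborel))"
    using assms(2) unfolding pos_part_negligible_def by blast
  then obtain \<rho> where \<rho>: "\<forall>i\<in>I. (\<rho> i \<longlongrightarrow> 0) sequentially \<and> (\<forall>n. 0 \<le> \<rho> i n) \<and>
      (\<forall>\<^sub>F n in sequentially. (\<integral>\<^sup>+v\<in>S. ennreal ((max (D v) 0)\<^sup>2 * K i n v) \<partial>lborel)
        \<le> ennreal (\<rho> i n) * (\<integral>\<^sup>+v. ennreal ((D v)\<^sup>2 * K i n v) \<partial>lborel))"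
    by (rule bchoice[THEN exE])
  have "\<forall>\<^sub>F n in sequentially. \<forall>i\<in>I. (\<integral>\<^sup>+v\<in>S. ennreal ((max (D v) 0)\<^sup>2 * K i n v) \<partial>lborel)
      \<le> ennreal (\<Sum>j\<in>I. \<rho> j n) * (\<integral>\<^sup>+v. ennreal ((D v)\<^sup>2 * K i n v) \<partial>lborel)"
  proof (rule eventually_mono[OF eventually_ball_finite[OF assms(1)]])
    show "\<forall>i\<in>I. \<forall>\<^sub>F n in sequentially. (\<integral>\<^sup>+v\<in>S. ennreal ((max (D v) 0)\<^sup>2 * K i n v) \<partial>lborel)
        \<le> ennreal (\<rho> i n) * (\<integral>\<^sup>+v. ennreal ((D v)\<^sup>2 * K i n v) \<partial>lborel)"
      using \<rho> by blast
    have "\<rho> i n \<le> (\<Sum>j\<in>I. \<rho> j n)" if "i \<in> I" for i n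
      using \<rho> assms(1) that by (intro member_le_sum) auto
    then show "\<forall>i\<in>I. X i \<le> ennreal (\<rho> i n) * Y i \<Longrightarrow> \<forall>i\<in>I. X i \<le> ennreal (\<Sum>j\<in>I. \<rho> j n) * Y i"
      for n and X Y :: "_ \<Rightarrow> ennreal"
      by (auto intro: order_trans[OF _ mult_right_mono[OF ennreal_leI]])
  qed
  moreover have "((\<lambda>n. \<Sum>j\<in>I. \<rho> j n) \<longlongrightarrow> 0) sequentially" "\<forall>n. 0 \<le> (\<Sum>j\<in>I. \<rho> j n)"
    using \<rho> by (auto intro: tendsto_null_sum sum_nonneg)
  ultimately show ?thesis by blast
qed

lemma pos_part_negligible_weighted_sum:
  assumes [measurable]: "D \<in> borel_measurable borel" "\<And>i n. K i n \<in> borel_measurable borel" "S \<in> sets borel"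
    and I: "finite I" and neg: "\<And>i. i \<in> I \<Longrightarrow> pos_part_negligible S D (K i)"
    and w: "\<And>i n. i \<in> I \<Longrightarrow> 0 \<le> w i n" and K: "\<And>i n v. i \<in> I \<Longrightarrow> 0 \<le> (D v)\<^sup>2 * K i n v"
  shows "pos_part_negligible S D (\<lambda>n v. \<Sum>i\<in>I. w i n * K i n v)"
proof -
  obtain \<rho> where \<rho>: "(\<rho> \<longlongrightarrow> 0) sequentially" "\<forall>n. 0 \<le> \<rho> n"
    and ev: "\<forall>\<^sub>F n in sequentially. \<forall>i\<in>I. (\<integral>\<^sup>+v\<in>S. ennreal ((max (D v) 0)\<^sup>2 * K i n v) \<partial>lborel)
        \<le> ennreal (\<rho> n) * (\<integral>\<^sup>+v. ennreal ((D v)\<^sup>2 * K i n v) \<partial>lborel)"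
    using pos_part_negligible_uniform[where K=K, OF I neg] by blast
  have set_eq: "(\<integral>\<^sup>+v\<in>S. ennreal (h v * g v) \<partial>lborel) = (\<integral>\<^sup>+v. ennreal (h v * indicator S v * g v) \<partial>lborel)"
    for h g :: "real \<Rightarrow> real"
    by (intro nn_integral_cong) (simp add: indicator_def)
  have K\<^sub>S: "0 \<le> (max (D v) 0)\<^sup>2 * indicator S v * K i n v" if "i \<in> I" for i n v
    using K[OF that, of v n] by (auto simp: max_def indicator_def)
  from ev have "\<forall>\<^sub>F n in sequentially. (\<integral>\<^sup>+v\<in>S. ennreal ((max (D v) 0)\<^sup>2 * (\<Sum>i\<in>I. w i n * K i n v)) \<partial>lborel)
      \<le> ennreal (\<rho> n) * (\<integral>\<^sup>+v. ennreal ((D v)\<^sup>2 * (\<Sum>i\<in>I. w i n * K i n v)) \<partial>lborel)"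
  proof eventually_elim
    case (elim n)
    have "(\<integral>\<^sup>+v\<in>S. ennreal ((max (D v) 0)\<^sup>2 * (\<Sum>i\<in>I. w i n * K i n v)) \<partial>lborel)
        = (\<Sum>i\<in>I. ennreal (w i n) * (\<integral>\<^sup>+v\<in>S. ennreal ((max (D v) 0)\<^sup>2 * K i n v) \<partial>lborel))"
      unfolding set_eq using K\<^sub>S w by (subst nn_integral_mult_weighted_sum[OF I]) auto
    also have "\<dots> \<le> (\<Sum>i\<in>I. ennreal (w i n) * (ennreal (\<rho> n) * (\<integral>\<^sup>+v. ennreal ((D v)\<^sup>2 * K i n v) \<partial>lborel)))"
      using elim by (intro sum_mono mult_left_mono) auto
    also have "\<dots> = ennreal (\<rho> n) * (\<integral>\<^sup>+v. ennreal ((D v)\<^sup>2 * (\<Sum>i\<in>I. w i n * K i n v)) \<partial>lborel)"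
      using K w by (subst nn_integral_mult_weighted_sum[OF I]) (auto simp: sum_distrib_left mult_ac)
    finally show ?case .
  qed
  then show ?thesis using \<rho> unfolding pos_part_negligible_def by blast
qed

lemma nn_integral_interval_pos:
  fixes f :: "real \<Rightarrow> real"
  assumes [measurable]: "f \<in> borel_measurable borel" and "b1 < b2" and pos: "\<forall>w\<in>{b1..b2}. 0 < f w"
  shows "0 < (\<integral>\<^sup>+w\<in>{b1..b2}. ennreal (f w) \<partial>lborel)"
proof (rule ccontr)
  assume "\<not> ?thesis"
  then have "(\<integral>\<^sup>+w\<in>{b1..b2}. ennreal (f w) \<partial>lborel) = 0" by (simp add: not_less)
  then have "AE w in lborel. ennreal (f w) * indicator {b1..b2} w = 0"
    by (subst (asm) nn_integral_0_iff_AE) auto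
  then have "AE w in lborel. w \<notin> {b1..b2}"
    by (rule eventually_mono) (use pos in \<open>force simp: indicator_def\<close>)
  then have "emeasure lborel {b1..b2} = 0"
    by (subst (asm) AE_iff_measurable[of "{b1..b2}"]) auto
  then show False using assms(2) by simp
qed

text \<open>Multiply \<open>E v \<le> r E w\<close> by \<open>D(w)\<^sup>2\<close> and integrate over \<open>w \<in> [b1, b2]\<close>.\<close>

lemma pos_part_nn_integral_dominated:
  fixes D E :: "real \<Rightarrow> real"
  assumes [measurable]: "D \<in> borel_measurable borel" "E \<in> borel_measurable borel" "S \<in> sets borel"
    and r: "0 \<le> r" and E: "\<forall>w\<in>{b1..b2}. 0 \<le> E w"
    and pos: "\<forall>v\<in>S. 0 < D v \<longrightarrow> v \<in> V" and dom: "\<forall>v\<in>V. \<forall>w\<in>{b1..b2}. E v \<le> r * E w"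
  shows "(\<integral>\<^sup>+v\<in>S. ennreal ((max (D v) 0)\<^sup>2 * E v) \<partial>lborel) * (\<integral>\<^sup>+w\<in>{b1..b2}. ennreal ((D w)\<^sup>2) \<partial>lborel)
    \<le> ennreal r * (\<integral>\<^sup>+v. ennreal ((D v)\<^sup>2) \<partial>lborel) * (\<integral>\<^sup>+v. ennreal ((D v)\<^sup>2 * E v) \<partial>lborel)"
    (is "?I * _ \<le> ennreal r * ?M * _")
proof -
  have bound: "?I \<le> ennreal (r * E w) * ?M" if w: "w \<in> {b1..b2}" for w
  proof -
    have "ennreal ((max (D v) 0)\<^sup>2 * E v) * indicator S v \<le> ennreal (r * E w) * ennreal ((D v)\<^sup>2)" for v
    proof (cases "v \<in> S \<and> 0 < D v")
      case True
      then have "E v \<le> r * E w" using pos dom w by blast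
      moreover have "0 \<le> r * E w" using r E w by simp
      ultimately show ?thesis
        using True by (simp add: ennreal_mult'[symmetric] mult.commute mult_left_mono ennreal_leI)
    qed (auto simp: indicator_def max_def)
    then show ?thesis
      by (subst nn_integral_cmult[symmetric]) (auto intro: nn_integral_mono)
  qed
  have "?I * (\<integral>\<^sup>+w\<in>{b1..b2}. ennreal ((D w)\<^sup>2) \<partial>lborel) = (\<integral>\<^sup>+w\<in>{b1..b2}. ?I * ennreal ((D w)\<^sup>2) \<partial>lborel)"
    by (subst nn_integral_cmult[symmetric]) (auto simp: mult_ac)
  also have "\<dots> \<le> (\<integral>\<^sup>+w. ennreal r * ?M * ennreal ((D w)\<^sup>2 * E w) \<partial>lborel)"
  proof (intro nn_integral_mono)
    fix w
    show "?I * ennreal ((D w)\<^sup>2) * indicator {b1..b2} w \<le> ennreal r * ?M * ennreal ((D w)\<^sup>2 * E w)"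
    proof (cases "w \<in> {b1..b2}")
      case True
      then have "?I * ennreal ((D w)\<^sup>2) \<le> ennreal (r * E w) * ?M * ennreal ((D w)\<^sup>2)"
        using bound by (intro mult_right_mono) auto
      then show ?thesis using True r E by (simp add: ennreal_mult' ennreal_mult mult_ac)
    qed simp
  qed
  also have "\<dots> = ennreal r * ?M * (\<integral>\<^sup>+v. ennreal ((D v)\<^sup>2 * E v) \<partial>lborel)"
    by (rule nn_integral_cmult) simp
  finally show ?thesis .
qed

lemma ennreal_le_divide_of_mult_le:
  fixes I T :: ennreal
  assumes "I * ennreal K \<le> ennreal c * T" "0 < K" "0 \<le> c"
  shows "I \<le> ennreal (c / K) * T"
proof -
  have "I = I * ennreal K * ennreal (1 / K)"
    using assms(2) by (simp add: mult.assoc ennreal_mult[symmetric])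
  also have "\<dots> \<le> ennreal c * T * ennreal (1 / K)"
    using assms(1) by (rule mult_right_mono) simp
  also have "\<dots> = ennreal (c / K) * T"
    using assms(2,3) by (simp add: ennreal_mult[symmetric] mult_ac)
  finally show ?thesis .
qed

lemma pos_part_negligible_dominated:
  fixes D :: "real \<Rightarrow> real" and E :: "nat \<Rightarrow> real \<Rightarrow> real"
  assumes [measurable]: "D \<in> borel_measurable borel" "\<And>n. E n \<in> borel_measurable borel" "S \<in> sets borel"
    and D: "(\<integral>\<^sup>+v. ennreal ((D v)\<^sup>2) \<partial>lborel) < \<infinity>" "b1 < b2" "\<forall>w\<in>{b1..b2}. D w < 0"
    and E: "\<And>n. \<forall>w\<in>{b1..b2}. 0 \<le> E n w" and pos: "\<forall>v\<in>S. 0 < D v \<longrightarrow> v \<in> V"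
    and r: "(r \<longlongrightarrow> 0) sequentially" "\<And>n. 0 \<le> r n"
    and dom: "\<forall>\<^sub>F n in sequentially. \<forall>v\<in>V. \<forall>w\<in>{b1..b2}. E n v \<le> r n * E n w"
  shows "pos_part_negligible S D E"
proof -
  obtain M where M: "(\<integral>\<^sup>+v. ennreal ((D v)\<^sup>2) \<partial>lborel) = ennreal M" "0 \<le> M"
    using D(1) by (cases "\<integral>\<^sup>+v. ennreal ((D v)\<^sup>2) \<partial>lborel") auto
  have "0 < (\<integral>\<^sup>+w\<in>{b1..b2}. ennreal ((D w)\<^sup>2) \<partial>lborel)"
    using D(2,3) by (intro nn_integral_interval_pos) auto
  moreover have "(\<integral>\<^sup>+w\<in>{b1..b2}. ennreal ((D w)\<^sup>2) \<partial>lborel) \<le> ennreal M"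
    unfolding M(1)[symmetric] by (intro nn_integral_mono) (simp add: indicator_def)
  ultimately obtain K where K: "(\<integral>\<^sup>+w\<in>{b1..b2}. ennreal ((D w)\<^sup>2) \<partial>lborel) = ennreal K" "0 < K"
    by (cases "\<integral>\<^sup>+w\<in>{b1..b2}. ennreal ((D w)\<^sup>2) \<partial>lborel") (auto simp: top_unique)
  from dom have "\<forall>\<^sub>F n in sequentially. (\<integral>\<^sup>+v\<in>S. ennreal ((max (D v) 0)\<^sup>2 * E n v) \<partial>lborel)
      \<le> ennreal (r n * M / K) * (\<integral>\<^sup>+v. ennreal ((D v)\<^sup>2 * E n v) \<partial>lborel)"
  proof eventually_elim
    case (elim n)
    then have "(\<integral>\<^sup>+v\<in>S. ennreal ((max (D v) 0)\<^sup>2 * E n v) \<partial>lborel) * ennreal K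
        \<le> ennreal (r n * M) * (\<integral>\<^sup>+v. ennreal ((D v)\<^sup>2 * E n v) \<partial>lborel)"
      unfolding K(1)[symmetric] using pos_part_nn_integral_dominated[of D "E n" S] E pos r(2) M
      by (simp add: ennreal_mult)
    then show ?case using K(2) M(2) r(2) by (intro ennreal_le_divide_of_mult_le) auto
  qed
  moreover have "((\<lambda>n. r n * M / K) \<longlongrightarrow> 0) sequentially"
    using tendsto_mult_left_zero[OF r(1), of "M / K"] by simp
  ultimately show ?thesis
    unfolding pos_part_negligible_def using r(2) M K by (intro exI[of _ "\<lambda>n. r n * M / K"]) auto
qed

section \<open>Where the quantile difference changes sign\<close>

lemma Fext_ereal [simp]: "Fext F (ereal x) = F x"
  by (simp add: Fext_def)

lemma Fext_less:
  assumes "strict_cdf F" "e < e'"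
  shows "Fext F e < Fext F e'"
  using assms(2) strict_cdf_pos[OF assms(1)] strict_cdf_less_1[OF assms(1)] strict_cdf_less_iff[OF assms(1)]
  by (cases e; cases e') (auto simp: Fext_def)

lemma Fext_less_iff: "strict_cdf F \<Longrightarrow> Fext F e < Fext F e' \<longleftrightarrow> e < e'"
  by (metis Fext_less less_asym not_less_iff_gr_or_eq)

lemma Fext_le_iff: "strict_cdf F \<Longrightarrow> Fext F e \<le> Fext F e' \<longleftrightarrow> e \<le> e'"
  by (meson Fext_less_iff not_less)

lemma Fext_bounds: "strict_cdf F \<Longrightarrow> 0 \<le> Fext F e \<and> Fext F e \<le> 1"
  using strict_cdf_pos strict_cdf_less_1 by (cases e) (auto simp: Fext_def less_imp_le)

lemma qinv_e_eq_qinv: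
  assumes F: "strict_cdf F" and u: "0 < u" "u < 1"
  shows "qinv_e F u = ereal (qinv F u)"
proof -
  have "{x. u \<le> F x} = {qinv F u..}" using qinv_le_iff[OF F u] by auto
  then show ?thesis
    unfolding qinv_e_def by (intro antisym) (auto intro: Inf_lower le_Inf_iff[THEN iffD2])
qed

lemma qinv_e_1:
  assumes "strict_cdf F"
  shows "qinv_e F 1 = \<infinity>"
proof -
  have "{x. 1 \<le> F x} = {}" using strict_cdf_less_1[OF assms] by (auto simp: not_le)
  then show ?thesis by (simp add: qinv_e_def top_ereal_def)
qed

lemma qinv_e_0:
  assumes "strict_cdf F"
  shows "qinv_e F 0 = -\<infinity>"
proof -
  have "qinv_e F 0 = Inf (range ereal)"
    using strict_cdf_pos[OF assms] by (simp add: qinv_e_def less_imp_le)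
  also have "\<dots> = -\<infinity>"
  proof (cases "Inf (range ereal)")
    case (real r)
    with Inf_lower[of "ereal (r - 1)" "range ereal"] show ?thesis by simp
  next
    case PInf
    with Inf_lower[of "ereal 0" "range ereal"] show ?thesis by simp
  qed simp
  finally show ?thesis .
qed

lemma ereal_less_qinv_e_iff:
  assumes F: "strict_cdf F" and g: "0 < g" "g \<le> 1"
  shows "ereal x < qinv_e F g \<longleftrightarrow> F x < g"
proof (cases "g = 1")
  case True
  then show ?thesis using qinv_e_1[OF F] strict_cdf_less_1[OF F] by simp
next
  case False
  then show ?thesis using g qinv_e_eq_qinv[OF F] qinv_le_iff[OF F] by (auto simp: not_le[symmetric])
qed

lemma qinv_e_less_ereal_iff:
  assumes F: "strict_cdf F" and g: "0 \<le> g" "g < 1"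
  shows "qinv_e F g < ereal x \<longleftrightarrow> g < F x"
proof (cases "g = 0")
  case True
  then show ?thesis using qinv_e_0[OF F] strict_cdf_pos[OF F] by simp
next
  case False
  then show ?thesis using g qinv_e_eq_qinv[OF F] qinv_less_iff[OF F] by auto
qed

lemma qinv_less_qinv_iff:
  assumes "strict_cdf F" "strict_cdf G" "0 < v" "v < 1"
  shows "qinv G v < qinv F v \<longleftrightarrow> F (qinv F v) < G (qinv F v)"
  using qinv_less_iff[OF assms(2-4)] cdf_qinv[OF assms(1,3,4)] by simp

lemma qinv_less_qinv_iff':
  assumes "strict_cdf F" "strict_cdf G" "0 < v" "v < 1"
  shows "qinv F v < qinv G v \<longleftrightarrow> G (qinv F v) < F (qinv F v)"
  using qinv_le_iff[OF assms(2-4)] cdf_qinv[OF assms(1,3,4)] by (auto simp: not_le[symmetric])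

lemma qinv_less_qinv_on_image:
  assumes F: "strict_cdf F" "strict_cdf G" and less: "\<forall>y\<in>{x1..x2}. G y < F y"
  shows "\<forall>v\<in>{F x1..F x2}. qinv F v < qinv G v"
proof
  fix v assume v: "v \<in> {F x1..F x2}"
  then have "0 < v" "v < 1" using strict_cdf_pos[OF F(1)] strict_cdf_less_1[OF F(1)] by (auto intro: less_le_trans le_less_trans)
  moreover have "qinv F v \<in> {x1..x2}" using v \<open>0 < v\<close> \<open>v < 1\<close> by (simp add: le_qinv_iff[OF F(1)] qinv_le_iff[OF F(1)])
  ultimately show "qinv F v < qinv G v"
    using less qinv_less_qinv_iff'[OF F] by auto
qed

lemma cdf_less_near:
  assumes F: "strict_cdf F" "strict_cdf G" and less: "G x < F x"
  shows "\<exists>e>0. \<forall>y\<in>{x - e..x + e}. G y < F y"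
proof -
  have "isCont (\<lambda>y. F y - G y) x"
    using F unfolding strict_cdf_def by (auto simp: continuous_on_eq_continuous_at intro!: continuous_intros)
  then have "\<forall>\<^sub>F y in at x. 0 < F y - G y"
    using less by (intro order_tendstoD(1)) (auto simp: isCont_def)
  then obtain e where e: "0 < e" "\<And>y. y \<noteq> x \<Longrightarrow> dist y x < e \<Longrightarrow> G y < F y"
    by (auto simp: eventually_at)
  show ?thesis
    using e less by (intro exI[of _ "e / 2"]) (force simp: dist_real_def)
qed

lemma qdiff_pos_below_le_c_pt:
  assumes F: "strict_cdf FX" "strict_cdf FY" and g: "0 < g" "g \<le> 1"
    and v: "0 < v" "v < g" and pos: "qinv FY v < qinv FX v"
  shows "v \<le> Fext FX (c_pt FX FY g)"
proof -
  have v1: "v < 1" using v g by simp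
  have "qinv FX v \<in> B0set FX FY"
    using pos qinv_less_qinv_iff[OF F v(1) v1] by (simp add: B0set_def)
  moreover have "ereal (qinv FX v) < qinv_e FX g"
    using ereal_less_qinv_e_iff[OF F(1) g] cdf_qinv[OF F(1) v(1) v1] v by simp
  ultimately have "ereal (qinv FX v) \<le> c_pt FX FY g"
    unfolding c_pt_def by (intro Sup_upper) auto
  then show ?thesis
    using Fext_le_iff[OF F(1)] cdf_qinv[OF F(1) v(1) v1] by (metis Fext_ereal)
qed

lemma qdiff_pos_above_ge_d_pt:
  assumes F: "strict_cdf FX" "strict_cdf FY" and g: "0 \<le> g" "g < 1"
    and v: "g < v" "v < 1" and pos: "qinv FY v < qinv FX v"
  shows "Fext FX (d_pt FX FY g) \<le> v"
proof -
  have v0: "0 < v" using v g by simp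
  have "qinv FX v \<in> B0set FX FY"
    using pos qinv_less_qinv_iff[OF F v0 v(2)] by (simp add: B0set_def)
  moreover have "qinv_e FX g < ereal (qinv FX v)"
    using qinv_e_less_ereal_iff[OF F(1) g] cdf_qinv[OF F(1) v0 v(2)] v by simp
  ultimately have "d_pt FX FY g \<le> ereal (qinv FX v)"
    unfolding d_pt_def by (intro Inf_lower) auto
  then show ?thesis
    using Fext_le_iff[OF F(1)] cdf_qinv[OF F(1) v0 v(2)] by (metis Fext_ereal)
qed

text \<open>Between \<open>c\<^sub>\<gamma>\<close> and \<open>F\<^sub>X\<^sup>-\<^sup>1(\<gamma>)\<close> there is a point of \<open>B\<^sub>2 \<setminus> B\<^sub>0\<close>, i.e. with \<open>F\<^sub>Y < F\<^sub>X\<close>;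
  by continuity the quantile difference is negative on a whole interval around its image.\<close>

lemma qdiff_neg_interval_below:
  assumes F: "strict_cdf FX" "strict_cdf FY" and g: "0 < g" "g \<le> 1"
    and ca: "Fext FX (c_pt FX FY g) < Fext FX (a_pt FX FY g)"
  shows "\<exists>b1 b2. Fext FX (c_pt FX FY g) < b1 \<and> b1 < b2 \<and> b2 < g \<and> (\<forall>v\<in>{b1..b2}. qinv FX v < qinv FY v)"
proof -
  have "c_pt FX FY g < a_pt FX FY g" using ca Fext_less_iff[OF F(1)] by blast
  then obtain x where x: "x \<in> B2set FX FY" "ereal x < qinv_e FX g" "c_pt FX FY g < ereal x"
    unfolding a_pt_def by (auto simp: less_Sup_iff)
  have "x \<notin> B0set FX FY"
    using x Sup_upper[of "ereal x" "ereal ` B0set FX FY \<inter> {..<qinv_e FX g}"] by (auto simp: c_pt_def)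
  then have "FY x < FX x" using x(1) by (auto simp: B0set_def B2set_def)
  then obtain e where e: "0 < e" "\<forall>y\<in>{x - e..x + e}. FY y < FX y" using cdf_less_near[OF F] by blast
  obtain z where z: "c_pt FX FY g < ereal z" "z < x" using ereal_dense2[OF x(3)] by auto
  define x1 where "x1 = max z (x - e)"
  have "ereal z \<le> ereal x1" by (simp add: x1_def)
  then have "Fext FX (c_pt FX FY g) < FX x1"
    using Fext_less[OF F(1) less_le_trans[OF z(1)], of "ereal x1"] by simp
  moreover have "FX x1 < FX x" "FX x < g"
    using z e x(2) ereal_less_qinv_e_iff[OF F(1) g] strict_cdf_less_iff[OF F(1)] by (auto simp: x1_def)
  moreover have "\<forall>y\<in>{x1..x}. FY y < FX y" using e(2) by (auto simp: x1_def)
  ultimately show ?thesis using qinv_less_qinv_on_image[OF F] by blast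
qed

lemma qdiff_neg_interval_above:
  assumes F: "strict_cdf FX" "strict_cdf FY" and g: "0 \<le> g" "g < 1"
    and bd: "Fext FX (b_pt FX FY g) < Fext FX (d_pt FX FY g)"
  shows "\<exists>b1 b2. g < b1 \<and> b1 < b2 \<and> b2 < Fext FX (d_pt FX FY g) \<and> (\<forall>v\<in>{b1..b2}. qinv FX v < qinv FY v)"
proof -
  have "b_pt FX FY g < d_pt FX FY g" using bd Fext_less_iff[OF F(1)] by blast
  then obtain x where x: "x \<in> B2set FX FY" "qinv_e FX g < ereal x" "ereal x < d_pt FX FY g"
    unfolding b_pt_def by (auto simp: Inf_less_iff)
  have "x \<notin> B0set FX FY"
    using x Inf_lower[of "ereal x" "ereal ` B0set FX FY \<inter> {qinv_e FX g<..}"] by (auto simp: d_pt_def)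
  then have "FY x < FX x" using x(1) by (auto simp: B0set_def B2set_def)
  then obtain e where e: "0 < e" "\<forall>y\<in>{x - e..x + e}. FY y < FX y" using cdf_less_near[OF F] by blast
  obtain z where z: "x < z" "ereal z < d_pt FX FY g" using ereal_dense2[OF x(3)] by auto
  define x2 where "x2 = min z (x + e)"
  have "ereal x2 \<le> ereal z" by (simp add: x2_def)
  then have "FX x2 < Fext FX (d_pt FX FY g)"
    using Fext_less[OF F(1) le_less_trans[OF _ z(2)], of "ereal x2"] by simp
  moreover have "g < FX x" "FX x < FX x2"
    using z e x(2) qinv_e_less_ereal_iff[OF F(1) g] strict_cdf_less_iff[OF F(1)] by (auto simp: x2_def)
  moreover have "\<forall>y\<in>{x..x2}. FY y < FX y" using e(2) by (auto simp: x2_def)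
  ultimately show ?thesis using qinv_less_qinv_on_image[OF F] by blast
qed

section \<open>Mixtures of order statistics\<close>

lemma pos_part_negligible_below_mode:
  fixes P Q :: "nat \<Rightarrow> nat"
  assumes F: "strict_cdf FX" "strict_cdf FY" and fin: "(\<integral>\<^sup>+v. ennreal ((qdiff FX FY v)\<^sup>2) \<partial>lborel) < \<infinity>"
    and g: "g \<le> 1" and ca: "A2set FX FY \<inter> {0<..<g} \<noteq> {} \<longrightarrow> Fext FX (c_pt FX FY g) < Fext FX (a_pt FX FY g)"
    and mode: "((\<lambda>n. real (P n) / real (P n + Q n)) \<longlongrightarrow> g) sequentially"
    and size: "filterlim (\<lambda>n. real (P n + Q n)) at_top sequentially"
  shows "pos_part_negligible {0<..<g} (qdiff FX FY) (\<lambda>n. beta_kernel (P n) (Q n))"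
proof (cases "\<forall>v\<in>{0<..<g}. qdiff FX FY v \<le> 0")
  case False
  then obtain v0 where v0: "0 < v0" "v0 < g" "0 < qdiff FX FY v0" by (auto simp: not_le)
  then have "v0 \<in> A2set FX FY \<inter> {0<..<g}" using g by (auto simp: A2set_def qdiff_def)
  then have "Fext FX (c_pt FX FY g) < Fext FX (a_pt FX FY g)" using ca by blast
  then obtain b1 b2 where b: "Fext FX (c_pt FX FY g) < b1" "b1 < b2" "b2 < g"
    and neg: "\<forall>v\<in>{b1..b2}. qinv FX v < qinv FY v"
    using qdiff_neg_interval_below[OF F _ g] v0 by auto
  define c where "c = Fext FX (c_pt FX FY g)"
  have c: "0 \<le> c" using Fext_bounds[OF F(1)] by (simp add: c_def)
  obtain r where r: "(r \<longlongrightarrow> 0) sequentially" "\<forall>n. 0 \<le> r n"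
    and dom: "\<forall>\<^sub>F n in sequentially. \<forall>v\<in>{0..c}. \<forall>w\<in>{b1..b2}.
      beta_kernel (P n) (Q n) v \<le> r n * beta_kernel (P n) (Q n) w"
    using beta_kernel_dominated_below[OF c _ _ b(3) g mode size, of b1] b c_def by auto
  have pos: "\<forall>v\<in>{0<..<g}. 0 < qdiff FX FY v \<longrightarrow> v \<in> {0..c}"
    using qdiff_pos_below_le_c_pt[OF F _ g] v0 g by (auto simp: qdiff_def c_def)
  show ?thesis
    using borel_measurable_qdiff[OF F] fin b c neg g r dom pos
    by (intro pos_part_negligible_dominated[where V="{0..c}"])
       (auto simp: qdiff_def c_def intro!: beta_kernel_nonneg)
qed (rule pos_part_negligible_nonpos)

lemma pos_part_negligible_above_mode:
  fixes P Q :: "nat \<Rightarrow> nat"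
  assumes F: "strict_cdf FX" "strict_cdf FY" and fin: "(\<integral>\<^sup>+v. ennreal ((qdiff FX FY v)\<^sup>2) \<partial>lborel) < \<infinity>"
    and g: "0 \<le> g" and bd: "A2set FX FY \<inter> {g<..<1} \<noteq> {} \<longrightarrow> Fext FX (b_pt FX FY g) < Fext FX (d_pt FX FY g)"
    and mode: "((\<lambda>n. real (P n) / real (P n + Q n)) \<longlongrightarrow> g) sequentially"
    and size: "filterlim (\<lambda>n. real (P n + Q n)) at_top sequentially"
  shows "pos_part_negligible {g<..<1} (qdiff FX FY) (\<lambda>n. beta_kernel (P n) (Q n))"
proof (cases "\<forall>v\<in>{g<..<1}. qdiff FX FY v \<le> 0")
  case False
  then obtain v0 where v0: "g < v0" "v0 < 1" "0 < qdiff FX FY v0" by (auto simp: not_le)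
  then have "v0 \<in> A2set FX FY \<inter> {g<..<1}" using g by (auto simp: A2set_def qdiff_def)
  then have "Fext FX (b_pt FX FY g) < Fext FX (d_pt FX FY g)" using bd by blast
  then obtain b1 b2 where b: "g < b1" "b1 < b2" "b2 < Fext FX (d_pt FX FY g)"
    and neg: "\<forall>v\<in>{b1..b2}. qinv FX v < qinv FY v"
    using qdiff_neg_interval_above[OF F g] v0 by auto
  define d where "d = Fext FX (d_pt FX FY g)"
  have d: "d \<le> 1" using Fext_bounds[OF F(1)] by (simp add: d_def)
  obtain r where r: "(r \<longlongrightarrow> 0) sequentially" "\<forall>n. 0 \<le> r n"
    and dom: "\<forall>\<^sub>F n in sequentially. \<forall>v\<in>{d..1}. \<forall>w\<in>{b1..b2}.
      beta_kernel (P n) (Q n) v \<le> r n * beta_kernel (P n) (Q n) w"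
    using beta_kernel_dominated_above[OF g b(1) _ _ d mode size, of b2] b d_def by auto
  have pos: "\<forall>v\<in>{g<..<1}. 0 < qdiff FX FY v \<longrightarrow> v \<in> {d..1}"
    using qdiff_pos_above_ge_d_pt[OF F g] v0 g by (auto simp: qdiff_def d_def)
  show ?thesis
    using borel_measurable_qdiff[OF F] fin b d neg g r dom pos
    by (intro pos_part_negligible_dominated[where V="{d..1}"])
       (auto simp: qdiff_def d_def intro!: beta_kernel_nonneg)
qed (rule pos_part_negligible_nonpos)

lemma pos_part_negligible_beta_kernel:
  fixes P Q :: "nat \<Rightarrow> nat"
  assumes F: "strict_cdf FX" "strict_cdf FY" and fin: "(\<integral>\<^sup>+v. ennreal ((qdiff FX FY v)\<^sup>2) \<partial>lborel) < \<infinity>"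
    and g: "0 \<le> g" "g \<le> 1"
    and ca: "A2set FX FY \<inter> {0<..<g} \<noteq> {} \<longrightarrow> Fext FX (c_pt FX FY g) < Fext FX (a_pt FX FY g)"
    and bd: "A2set FX FY \<inter> {g<..<1} \<noteq> {} \<longrightarrow> Fext FX (b_pt FX FY g) < Fext FX (d_pt FX FY g)"
    and mode: "((\<lambda>n. real (P n) / real (P n + Q n)) \<longlongrightarrow> g) sequentially"
    and size: "filterlim (\<lambda>n. real (P n + Q n)) at_top sequentially"
  shows "pos_part_negligible {0<..<1} (qdiff FX FY) (\<lambda>n. beta_kernel (P n) (Q n))"
proof -
  have "pos_part_negligible ({0<..<g} \<union> {g<..<1}) (qdiff FX FY) (\<lambda>n. beta_kernel (P n) (Q n))"
    using pos_part_negligible_below_mode[OF F fin g(2) ca mode size]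
      pos_part_negligible_above_mode[OF F fin g(1) bd mode size]
    by (intro pos_part_negligible_Un borel_measurable_qdiff[OF F] borel_measurable_beta_kernel) auto
  then show ?thesis
    by (rule pos_part_negligible_subset[OF pos_part_negligible_insert[of _ _ _ g]]) auto
qed

lemma qdiff_sq_mult_nonneg:
  "(\<forall>t\<in>{0<..<1}. 0 \<le> K t) \<Longrightarrow> 0 \<le> (qdiff F G v)\<^sup>2 * K v"
  by (simp add: qdiff_def)

lemma pos_part_negligible_dphi:
  fixes a :: "nat \<Rightarrow> real"
  assumes F: "strict_cdf FX" "strict_cdf FY" and fin: "(\<integral>\<^sup>+v. ennreal ((qdiff FX FY v)\<^sup>2) \<partial>lborel) < \<infinity>"
    and lim: "(a \<longlongrightarrow> g) sequentially" and a: "\<And>n. 0 \<le> a n" "\<And>n. a n \<le> 1"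
    and ca: "A2set FX FY \<inter> {0<..<g} \<noteq> {} \<longrightarrow> Fext FX (c_pt FX FY g) < Fext FX (a_pt FX FY g)"
    and bd: "A2set FX FY \<inter> {g<..<1} \<noteq> {} \<longrightarrow> Fext FX (b_pt FX FY g) < Fext FX (d_pt FX FY g)"
  shows "pos_part_negligible {0<..<1} (qdiff FX FY) (\<lambda>n. dphi n (a n))"
proof -
  define P where "P n = order_index n (a n) - 1" for n
  define Q where "Q n = n - order_index n (a n)" for n
  have g: "0 \<le> g" "g \<le> 1"
    using a by (auto intro: tendsto_lowerbound[OF lim] tendsto_upperbound[OF lim])
  have "pos_part_negligible {0<..<1} (qdiff FX FY) (\<lambda>n. beta_kernel (P n) (Q n))"
    using order_index_mode_tendsto[OF lim a] unfolding P_def Q_def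
    by (intro pos_part_negligible_beta_kernel[OF F fin g ca bd])
  then have "pos_part_negligible {0<..<1} (qdiff FX FY)
      (\<lambda>n v. \<Sum>i\<in>{()}. real n * real ((n - 1) choose P n) * beta_kernel (P n) (Q n) v)"
    by (intro pos_part_negligible_weighted_sum borel_measurable_qdiff[OF F] qdiff_sq_mult_nonneg)
       (auto intro: beta_kernel_nonneg)
  then show ?thesis by (simp add: dphi_def[abs_def] P_def Q_def)
qed

lemma epsW2_distortion_tendsto_0:
  assumes F: "strict_cdf FX" "strict_cdf FY"
    and \<psi>: "\<forall>\<^sub>F n in sequentially. smooth_distortion (\<psi> n) (\<psi>' n)"
    and neg: "pos_part_negligible {0<..<1} (qdiff FX FY) \<psi>'"
  shows "((\<lambda>n. epsW2 (\<psi> n \<circ> FX) (\<psi> n \<circ> FY)) \<longlongrightarrow> 0) sequentially"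
proof -
  obtain \<rho> where \<rho>: "(\<rho> \<longlongrightarrow> 0) sequentially" "\<forall>n. 0 \<le> \<rho> n"
    and ev: "\<forall>\<^sub>F n in sequentially. (\<integral>\<^sup>+v\<in>{0<..<1}. ennreal ((max (qdiff FX FY v) 0)\<^sup>2 * \<psi>' n v) \<partial>lborel)
      \<le> ennreal (\<rho> n) * (\<integral>\<^sup>+v. ennreal ((qdiff FX FY v)\<^sup>2 * \<psi>' n v) \<partial>lborel)"
    using neg unfolding pos_part_negligible_def by blast
  have "\<forall>\<^sub>F n in sequentially. 0 \<le> epsW2 (\<psi> n \<circ> FX) (\<psi> n \<circ> FY) \<and> epsW2 (\<psi> n \<circ> FX) (\<psi> n \<circ> FY) \<le> \<rho> n"
    using \<psi> ev
  proof eventually_elim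
    case (elim n)
    have "(\<integral>\<^sup>+v\<in>{0<..<1}. ennreal ((max (qdiff FX FY v) 0)\<^sup>2 * \<psi>' n v) \<partial>lborel)
        = (\<integral>\<^sup>+v. ennreal ((max (qdiff FX FY v) 0)\<^sup>2 * \<psi>' n v) \<partial>lborel)"
      by (intro nn_integral_cong) (simp add: qdiff_def indicator_def)
    with elim have "(\<integral>\<^sup>+u. ennreal ((max (qdiff (\<psi> n \<circ> FX) (\<psi> n \<circ> FY) u) 0)\<^sup>2) \<partial>lborel)
        \<le> ennreal (\<rho> n) * (\<integral>\<^sup>+u. ennreal ((qdiff (\<psi> n \<circ> FX) (\<psi> n \<circ> FY) u)\<^sup>2) \<partial>lborel)"
      using nn_integral_qdiff_distortion[OF elim(1) F, of "\<lambda>x. (max x 0)\<^sup>2"]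
        nn_integral_qdiff_distortion[OF elim(1) F, of "\<lambda>x. x\<^sup>2"]
      by (simp add: continuous_intros)
    then show ?case
      using epsW2_le[OF strict_cdf_distortion[OF elim(1) F(1)] strict_cdf_distortion[OF elim(1) F(2)]] \<rho>(2)
      by auto
  qed
  then show ?thesis
    using \<rho>(1) unfolding eventually_conj_iff by (elim conjE tendsto_sandwich[OF _ _ tendsto_const])
qed

lemma smooth_distortion_phi_mixture:
  assumes I: "finite I" "(\<Sum>i\<in>I. \<alpha> i) = 1" and \<alpha>: "\<And>i. i \<in> I \<Longrightarrow> 0 < \<alpha> i"
    and a: "\<And>i. i \<in> I \<Longrightarrow> a i \<le> 1" and n: "1 \<le> n"
  shows "smooth_distortion (\<lambda>u. \<Sum>i\<in>I. \<alpha> i * phi n (a i) u) (\<lambda>t. \<Sum>i\<in>I. \<alpha> i * dphi n (a i) t)"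
proof -
  have "I \<noteq> {}" using I by auto
  have "((\<lambda>u. \<Sum>i\<in>I. \<alpha> i * phi n (a i) u) has_real_derivative (\<Sum>i\<in>I. \<alpha> i * dphi n (a i) t)) (at t)" for t
    by (intro DERIV_sum DERIV_cmult phi_has_real_derivative a n)
  moreover have "continuous_on {0..1} (\<lambda>t. \<Sum>i\<in>I. \<alpha> i * dphi n (a i) t)"
    by (intro continuous_intros continuous_on_dphi)
  moreover have "0 \<le> (\<Sum>i\<in>I. \<alpha> i * dphi n (a i) t)" if "t \<in> {0..1}" for t
    using that \<alpha> by (intro sum_nonneg mult_nonneg_nonneg dphi_nonneg) (auto simp: less_imp_le)
  moreover have "0 < (\<Sum>i\<in>I. \<alpha> i * dphi n (a i) t)" if "t \<in> {0<..<1}" for t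
    using that \<alpha> a n I \<open>I \<noteq> {}\<close> by (intro sum_pos mult_pos_pos dphi_pos) auto
  moreover have "(\<Sum>i\<in>I. \<alpha> i * phi n (a i) 0) = 0" "(\<Sum>i\<in>I. \<alpha> i * phi n (a i) 1) = 1"
    using a n I by (simp_all add: phi_at_0 phi_at_1)
  ultimately show ?thesis unfolding smooth_distortion_def by blast
qed

theorem theorem5p4:
  fixes p :: nat
    and \<gamma> :: "nat \<Rightarrow> real" and \<alpha> :: "nat \<Rightarrow> real"
    and \<gamma>n :: "nat \<Rightarrow> nat \<Rightarrow> real"
    and \<delta> :: "nat \<Rightarrow> real"
    and FX FY :: "real \<Rightarrow> real"
    and \<phi> :: "nat \<Rightarrow> real \<Rightarrow> real"
  assumes gamma_range: "\<forall>i\<in>{1..p}. 0 \<le> \<gamma> i \<and> \<gamma> i \<le> 1"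
    and gamma_incr: "\<forall>i\<in>{1..p}. \<forall>j\<in>{1..p}. i < j \<longrightarrow> \<gamma> i < \<gamma> j"
    and alpha_range: "\<forall>i\<in>{1..p}. 0 < \<alpha> i \<and> \<alpha> i < 1"
    and alpha_sum: "(\<Sum>i=1..p. \<alpha> i) = 1"
    and gamma_n_range: "\<forall>i\<in>{1..p}. \<forall>n. 0 \<le> \<gamma>n i n \<and> \<gamma>n i n \<le> 1"
    and gamma_n_rate: "\<forall>i\<in>{1..p}. (\<lambda>n. \<gamma>n i n - \<gamma> i) \<in> O(\<lambda>n. 1 / real n)"
    and phi_def: "\<forall>n u. \<phi> n u = (\<Sum>i=1..p. \<alpha> i * phi n (\<gamma>n i n) u)"
    and FX_cdf: "is_cdf FX" and FY_cdf: "is_cdf FY"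
    and FX_cont: "continuous_on UNIV FX" and FY_cont: "continuous_on UNIV FY"
    and FX_strict: "strict_mono FX" and FY_strict: "strict_mono FY"
    and FX_mom: "integrable (interval_measure FX) (\<lambda>x. x\<^sup>2)"
    and FY_mom: "integrable (interval_measure FY) (\<lambda>x. x\<^sup>2)"
    and delta_pos: "\<forall>i\<in>{1..p}. 0 < \<delta> i"
    and delta_disj: "\<forall>i\<in>{1..p}. \<forall>j\<in>{1..p}. i \<noteq> j \<longrightarrow>
        {\<gamma> i - \<delta> i <..< \<gamma> i + \<delta> i} \<inter> {0..1} \<inter>
        ({\<gamma> j - \<delta> j <..< \<gamma> j + \<delta> j} \<inter> {0..1}) = {}"
    and deriv_ratio: "\<forall>i\<in>{1..p}. \<forall>a b. a \<in> {0..1} \<and> b \<in> {0..1} \<and>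
        ((\<gamma> i - \<delta> i \<le> a \<and> a < b \<and> b < \<gamma> i) \<or>
         (\<gamma> i < b \<and> b < a \<and> a \<le> \<gamma> i + \<delta> i)) \<longrightarrow>
        ((\<lambda>n. deriv (\<phi> n) a / deriv (\<phi> n) b) \<longlongrightarrow> 0) sequentially"
    and A1: "\<forall>i\<in>{1..p}. A2set FX FY \<inter> {0<..<\<gamma> i} \<noteq> {} \<longrightarrow>
        max (Fext FX (c_pt FX FY (\<gamma> i))) (\<gamma> i - \<delta> i) < Fext FX (a_pt FX FY (\<gamma> i))"
    and A2: "\<forall>i\<in>{1..p}. A2set FX FY \<inter> {\<gamma> i<..<1} \<noteq> {} \<longrightarrow>
        Fext FX (b_pt FX FY (\<gamma> i)) < min (Fext FX (d_pt FX FY (\<gamma> i))) (\<gamma> i + \<delta> i)"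
  shows "((\<lambda>n. epsW2 (\<phi> n \<circ> FX) (\<phi> n \<circ> FY)) \<longlongrightarrow> 0) sequentially"
proof -
  have F: "strict_cdf FX" "strict_cdf FY"
    using FX_cdf FX_cont FX_strict FY_cdf FY_cont FY_strict unfolding strict_cdf_def is_cdf_def by auto
  have fin: "(\<integral>\<^sup>+v. ennreal ((qdiff FX FY v)\<^sup>2) \<partial>lborel) < \<infinity>"
    by (rule qdiff_sq_nn_integral_finite[OF F(1) FX_mom F(2) FY_mom])
  have "pos_part_negligible {0<..<1} (qdiff FX FY) (\<lambda>n. dphi n (\<gamma>n i n))" if i: "i \<in> {1..p}" for i
  proof (rule pos_part_negligible_dphi[OF F fin])
    show "((\<lambda>n. \<gamma>n i n) \<longlongrightarrow> \<gamma> i) sequentially"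
      using gamma_n_rate i by (intro tendsto_of_bigo_inverse) simp
  qed (use gamma_n_range A1 A2 i in simp_all)
  then have neg: "pos_part_negligible {0<..<1} (qdiff FX FY) (\<lambda>n t. \<Sum>i=1..p. \<alpha> i * dphi n (\<gamma>n i n) t)"
    using borel_measurable_qdiff[OF F] borel_measurable_continuous_onI[OF continuous_on_dphi] alpha_range
    by (intro pos_part_negligible_weighted_sum qdiff_sq_mult_nonneg) (auto intro: dphi_nonneg less_imp_le)
  have phi_eq: "\<phi> n = (\<lambda>u. \<Sum>i=1..p. \<alpha> i * phi n (\<gamma>n i n) u)" for n
    using phi_def by auto
  have "\<forall>\<^sub>F n in sequentially. smooth_distortion (\<phi> n) (\<lambda>t. \<Sum>i=1..p. \<alpha> i * dphi n (\<gamma>n i n) t)"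
    using eventually_ge_at_top[of 1]
    by eventually_elim (use alpha_sum alpha_range gamma_n_range in \<open>auto simp: phi_eq intro!: smooth_distortion_phi_mixture\<close>)
  then show ?thesis by (rule epsW2_distortion_tendsto_0[OF F _ neg])
qed

end
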